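(* Let $G\cong\mathbb{R}^{d_1}\times\mathbb{R}^{d_2}$ be a 2-step stratified group with sub-Laplacian $\mathcal{L}$. For $\boldsymbol{\xi}=(\xi,\mu)\in(\mathbb{R}^{d_1}\setminus\{0\})\times(\mathbb{R}^{d_2}\setminus\{0\})$ and $t\in\mathbb{R}$, let $(x^t,u^t,\xi^t,\mu^t)$ denote the solution at time $t$ of the Hamilton equations with Hamiltonian $\mathcal{H}(x,u,\xi,\mu)=|\xi+J_\mu x/2|$ and initial datum $(0,0,\xi,\mu)$. Set $\theta \mathrel{:=} \frac{t|\mu|}{2|\xi|}$, $\bar\mu\mathrel{:=}\mu/|\mu|$, $\bar\xi\mathrel{:=}\xi/|\xi|$. Then \[ x^t = \frac{1}{|\mu|}\frac{\exp(2\theta J_{\bar\mu})-I}{J_{\bar\mu}}\xi = t\exp(\theta J_{\bar\mu})\frac{\sinh(\theta J_{\bar\mu})}{\theta J_{\bar\mu}}\bar\xi,\qquad \xi^t = \tfrac12(\exp(2\theta J_{\bar\mu})+I)\xi = \exp(\theta J_{\bar\mu})\cosh(\theta J_{\bar\mu})\xi, \] \[ u^t = \frac{t^2}{4}\int_0^1\Big[\frac{\exp(2\tau\theta J_{\bar\mu})-I}{\theta J_{\bar\mu}}\bar\xi,\exp(2\tau\theta J_{\bar\mu})\bar\xi\Big]d\tau,\qquad \mu\cdot u^t = \frac{t|\xi|}{2}\Big[1-\Big\langle\frac{\sinh(\theta J_{\bar\mu})}{\theta J_{\bar\mu}}\cosh(\theta J_{\bar\mu})\bar\xi,\bar\xi\Big\rangle\Big].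 \] Moreover, if $G$ is of Heisenberg type, then \[ x^t = t\frac{\sin\theta}{\theta}((\cos\theta)I+(\sin\theta)J_{\bar\mu})\bar\xi,\qquad \xi^t=\cos\theta((\cos\theta)I+(\sin\theta)J_{\bar\mu})\xi,\qquad u^t=\frac{t^2}{4\theta}\Big[1-\frac{\sin\theta}{\theta}\cos\theta\Big]\bar\mu. \]
   Context: $G$ is a 2-step stratified Lie group identified with $\mathbb{R}^{d_1}_x\times\mathbb{R}^{d_2}_u$ via exponential coordinates, coordinates on $\mathfrak{g}_1$ orthonormal for the inner product $\langle\cdot,\cdot\rangle$ making the vector fields $X_j$ of $\mathcal{L}=-\sum X_j^2$ orthonormal; $[\cdot,\cdot]$ is the Lie bracket $\mathbb{R}^{d_1}\times\mathbb{R}^{d_1}\to\mathbb{R}^{d_2}$. $J_\mu$ is the skew-symmetric matrix with $\langle J_\mu x,x'\rangle=\mu\cdot[x,x']$. Matrix functions such as $\frac{\exp(sJ)-I}{J}$, $\frac{\sinh(\theta J)}{\theta J}$ are defined by the corresponding entire power series (no invertibility needed); expressions with $\theta$ in a denominator are understood by continuity at $\theta=0$. $G$ is of Heisenberg type if $-J_\mu^2=|\mu|^2I$ for all $\mu$. *)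

theory Defs
  imports "HOL-Analysis.Analysis"
begin

text \<open>A 2-step stratified Lie algebra structure on R^d1 + R^d2 (exponential coordinates,
orthonormal coordinates on the first layer): a skew-symmetric bilinear bracket
br : R^d1 x R^d1 -> R^d2 whose image spans the second layer.\<close>
definition two_step_bracket :: "(real^'n \<Rightarrow> real^'n \<Rightarrow> real^'m) \<Rightarrow> bool" where
  "two_step_bracket br \<longleftrightarrow> bilinear br \<and> (\<forall>x y. br x y = - br y x)
      \<and> span (range (\<lambda>(x, y). br x y)) = UNIV"

text \<open>J_mu: the matrix with  (J_mu x) . x' = mu . [x, x'].\<close>
definition Jmat :: "(real^'n \<Rightarrow> real^'n \<Rightarrow> real^'m) \<Rightarrow> real^'m \<Rightarrow> real^'n^'n" where
  "Jmat br \<mu> = (\<chi> k j. \<mu> \<bullet> br (axis j 1) (axis k 1))"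

definition heisenberg_type :: "(real^'n \<Rightarrow> real^'n \<Rightarrow> real^'m) \<Rightarrow> bool" where
  "heisenberg_type br \<longleftrightarrow> (\<forall>\<mu>. - (Jmat br \<mu> ** Jmat br \<mu>) = (norm \<mu>)\<^sup>2 *\<^sub>R mat 1)"

fun mpow :: "real^'n^'n \<Rightarrow> nat \<Rightarrow> real^'n^'n" where
  "mpow A 0 = mat 1"
| "mpow A (Suc k) = A ** mpow A k"

definition mpowser :: "(nat \<Rightarrow> real) \<Rightarrow> real^'n^'n \<Rightarrow> real^'n^'n" where
  "mpowser c A = (\<Sum>k. c k *\<^sub>R mpow A k)"

definition mexp :: "real^'n^'n \<Rightarrow> real^'n^'n" where
  "mexp A = mpowser (\<lambda>k. 1 / fact k) A"

definition mcosh :: "real^'n^'n \<Rightarrow> real^'n^'n" where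
  "mcosh A = mpowser (\<lambda>k. if even k then 1 / fact k else 0) A"

text \<open>sinh(A)/A, i.e. the series of sinh(z)/z evaluated at A\<close>
definition msinhc :: "real^'n^'n \<Rightarrow> real^'n^'n" where
  "msinhc A = mpowser (\<lambda>k. if even k then 1 / fact (k + 1) else 0) A"

text \<open>(exp(s A) - I)/A, i.e. the series of (exp(s z) - 1)/z evaluated at A\<close>
definition mexpm1_div :: "real \<Rightarrow> real^'n^'n \<Rightarrow> real^'n^'n" where
  "mexpm1_div s A = mpowser (\<lambda>k. s ^ (k + 1) / fact (k + 1)) A"

text \<open>sin(theta)/theta, extended by continuity at 0\<close>
definition sinc :: "real \<Rightarrow> real" where
  "sinc \<theta> = (if \<theta> = 0 then 1 else sin \<theta> / \<theta>)"

definition hamiltonian_curve ::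
  "(('a::real_inner \<times> 'a) \<Rightarrow> real) \<Rightarrow> (real \<Rightarrow> 'a \<times> 'a) \<Rightarrow> bool" where
  "hamiltonian_curve H \<gamma> \<longleftrightarrow> (\<forall>t. \<exists>Dq Dp.
      (H has_derivative (\<lambda>h. Dq \<bullet> fst h + Dp \<bullet> snd h)) (at (\<gamma> t))
      \<and> (\<gamma> has_vector_derivative (Dp, - Dq)) (at t))"

definition sR_hamiltonian :: "(real^'n \<Rightarrow> real^'n \<Rightarrow> real^'m)
    \<Rightarrow> ((real^'n) \<times> (real^'m)) \<times> ((real^'n) \<times> (real^'m)) \<Rightarrow> real" where
  "sR_hamiltonian br z = (case z of ((x, u), (\<xi>, \<mu>)) \<Rightarrow> norm (\<xi> + (1/2) *\<^sub>R (Jmat br \<mu> *v x)))"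

end

theory Submission
  imports Defs
begin

text \<open>Along a normal geodesic the vertical covector \<open>\<mu>\<close> is conserved, and so is the length
  of the horizontal momentum \<open>w = \<xi> + J\<^sub>\<mu> x / 2\<close>, because \<open>w' = J\<^sub>\<mu> w / |w|\<close> with \<open>J\<^sub>\<mu>\<close>
  skew (\<open>w\<close> never vanishes, as \<open>|w|\<close> is not differentiable there).  Hence \<open>w\<close> solves the
  linear equation \<open>w' = A w\<close>, \<open>A = J\<^sub>\<mu> / |\<xi>|\<close>, so \<open>w(s) = exp(s A) \<xi>\<close>; integrating
  \<open>x' = w / |\<xi>|\<close> gives \<open>x(s) = ((exp(s A) - I) / A) \<xi> / |\<xi>|\<close>, and \<open>\<xi>(s) = (w(s) + \<xi>) / 2\<close>.
  The vertical velocity is \<open>[x, w / |\<xi>|] / 2\<close>; its \<open>\<mu>\<close>-component is \<open>(|\<xi>| - \<langle>\<xi>, x'\<rangle>) / 2\<close>,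
  so \<open>\<mu> \<cdot> u = (s |\<xi>| - \<langle>\<xi>, x\<rangle>) / 2\<close>, and in \<open>\<langle>\<xi>, x\<rangle>\<close> the skew-symmetry of \<open>A\<close> kills
  the odd part of the power series.  The forms in \<open>\<theta>\<close> are identities between power series.
  In the Heisenberg-type case \<open>J\<^sup>2 = -I\<close> turns the series into \<open>cos\<close> and \<open>sin\<close>, and the
  Clifford relations \<open>J\<^sub>\<nu> J\<^sub>\<mu> + J\<^sub>\<mu> J\<^sub>\<nu> = -2 \<langle>\<nu>, \<mu>\<rangle> I\<close> make \<open>u\<close> parallel to \<open>\<mu>\<close>.\<close>

section \<open>Entire coefficient sequences\<close>

definition entire_coeffs :: "(nat \<Rightarrow> real) \<Rightarrow> bool" where
  "entire_coeffs c \<longleftrightarrow> (\<forall>r. summable (\<lambda>k. \<bar>c k\<bar> * r ^ k))"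

definition cauchy_conv :: "(nat \<Rightarrow> real) \<Rightarrow> (nat \<Rightarrow> real) \<Rightarrow> nat \<Rightarrow> real" where
  "cauchy_conv a b k = (\<Sum>p\<le>k. a p * b (k - p))"

lemma entire_coeffsI:
  assumes "\<And>r. r \<ge> 0 \<Longrightarrow> summable (\<lambda>k. \<bar>c k\<bar> * r ^ k)"
  shows "entire_coeffs c"
  unfolding entire_coeffs_def
proof
  fix r :: real
  show "summable (\<lambda>k. \<bar>c k\<bar> * r ^ k)"
    by (rule summable_comparison_test'[where N=0, OF assms[of "\<bar>r\<bar>"]])
       (auto simp: abs_mult power_abs)
qed

lemma entire_coeffsD: "entire_coeffs c \<Longrightarrow> summable (\<lambda>k. \<bar>c k\<bar> * r ^ k)"
  unfolding entire_coeffs_def by blast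

lemma entire_coeffs_dominated:
  assumes "entire_coeffs d" and "\<And>k. \<bar>c k\<bar> \<le> C * \<bar>d k\<bar>"
  shows "entire_coeffs c"
proof (rule entire_coeffsI)
  fix r :: real assume "r \<ge> 0"
  show "summable (\<lambda>k. \<bar>c k\<bar> * r ^ k)"
  proof (rule summable_comparison_test'[where N=0])
    show "summable (\<lambda>k. C * (\<bar>d k\<bar> * r ^ k))"
      using entire_coeffsD[OF assms(1)] by (rule summable_mult)
    fix k
    show "norm (\<bar>c k\<bar> * r ^ k) \<le> C * (\<bar>d k\<bar> * r ^ k)"
      using mult_right_mono[OF assms(2)[of k], of "r ^ k"] \<open>r \<ge> 0\<close> by (simp add: mult.assoc)
  qed
qed

lemma entire_coeffs_add: "entire_coeffs c \<Longrightarrow> entire_coeffs d \<Longrightarrow> entire_coeffs (\<lambda>k. c k + d k)"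
proof (rule entire_coeffsI)
  fix r :: real assume "entire_coeffs c" "entire_coeffs d" "r \<ge> 0"
  then show "summable (\<lambda>k. \<bar>c k + d k\<bar> * r ^ k)"
    by (intro summable_comparison_test'[where N=0,
          OF summable_add[OF entire_coeffsD[of c r] entire_coeffsD[of d r]]])
       (auto simp: distrib_right[symmetric] intro!: mult_right_mono)
qed

lemma entire_coeffs_cmult: "entire_coeffs c \<Longrightarrow> entire_coeffs (\<lambda>k. a * c k)"
  by (rule entire_coeffs_dominated[where C="\<bar>a\<bar>"]) (auto simp: abs_mult)

lemma entire_coeffs_mult_power: "entire_coeffs c \<Longrightarrow> entire_coeffs (\<lambda>k. c k * s ^ k)"
  unfolding entire_coeffs_def
  by (metis (no_types, lifting) abs_mult ext mult.assoc power_abs power_mult_distrib)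

lemma entire_coeffs_inverse_fact: "entire_coeffs (\<lambda>k. 1 / fact k)"
  unfolding entire_coeffs_def by (simp add: divide_inverse summable_exp)

lemma entire_coeffs_exp: "entire_coeffs (\<lambda>k. s ^ k / fact k)"
  using entire_coeffs_mult_power[OF entire_coeffs_inverse_fact, of s] by simp

lemma entire_coeffs_expm1_div: "entire_coeffs (\<lambda>k. s ^ (k + 1) / fact (k + 1))"
proof (rule entire_coeffs_dominated[OF entire_coeffs_exp[of s], where C="\<bar>s\<bar>"])
  fix k
  have "\<bar>s ^ (k + 1) / fact (k + 1)\<bar> = \<bar>s\<bar> * (\<bar>s\<bar> ^ k / fact (k + 1))"
    by (simp add: abs_mult power_abs)
  also have "\<dots> \<le> \<bar>s\<bar> * (\<bar>s\<bar> ^ k / fact k)"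
    by (intro mult_left_mono divide_left_mono) (auto simp: fact_mono)
  finally show "\<bar>s ^ (k + 1) / fact (k + 1)\<bar> \<le> \<bar>s\<bar> * \<bar>s ^ k / fact k\<bar>"
    by (simp add: power_abs)
qed

lemma entire_coeffs_cauchy_conv:
  assumes "entire_coeffs a" "entire_coeffs b"
  shows "entire_coeffs (cauchy_conv a b)"
proof (rule entire_coeffsI)
  fix r :: real assume r: "r \<ge> 0"
  let ?f = "\<lambda>k. \<bar>a k\<bar> * r ^ k" and ?g = "\<lambda>k. \<bar>b k\<bar> * r ^ k"
  have "summable (\<lambda>k. \<Sum>i\<le>k. ?f i * ?g (k - i))"
    by (rule summable_Cauchy_product) (use entire_coeffsD[OF assms(1)] entire_coeffsD[OF assms(2)] r in auto)
  then show "summable (\<lambda>k. \<bar>cauchy_conv a b k\<bar> * r ^ k)"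
  proof (rule summable_comparison_test'[where N=0])
    fix k
    have "\<bar>cauchy_conv a b k\<bar> * r ^ k \<le> (\<Sum>i\<le>k. \<bar>a i\<bar> * \<bar>b (k - i)\<bar>) * r ^ k"
      unfolding cauchy_conv_def using r
      by (intro mult_right_mono order_trans[OF sum_abs]) (auto simp: abs_mult)
    also have "\<dots> = (\<Sum>i\<le>k. ?f i * ?g (k - i))"
      unfolding sum_distrib_right
      by (intro sum.cong refl) (simp add: mult_ac flip: power_add)
    finally show "norm (\<bar>cauchy_conv a b k\<bar> * r ^ k) \<le> (\<Sum>i\<le>k. ?f i * ?g (k - i))"
      using r by simp
  qed
qed

lemma entire_coeffs_diffs: "entire_coeffs a \<Longrightarrow> entire_coeffs (diffs a)"
proof (rule entire_coeffsI)
  fix r :: real assume "entire_coeffs a" "r \<ge> 0"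
  then have "summable (\<lambda>n. diffs (\<lambda>k. \<bar>a k\<bar>) n * r ^ n)"
    by (intro termdiff_converges_all) (auto dest: entire_coeffsD)
  then show "summable (\<lambda>k. \<bar>diffs a k\<bar> * r ^ k)"
    by (simp add: diffs_def abs_mult)
qed

lemma entire_coeffs_shift:
  "entire_coeffs c \<Longrightarrow> entire_coeffs (\<lambda>k. if k = 0 then 0 else c (k - 1))"
proof (rule entire_coeffsI)
  fix r :: real assume "entire_coeffs c"
  then have "summable (\<lambda>k. r * (\<bar>c k\<bar> * r ^ k))"
    by (intro summable_mult entire_coeffsD)
  then show "summable (\<lambda>k. \<bar>if k = 0 then 0 else c (k - 1)\<bar> * r ^ k)"
    by (subst summable_Suc_iff[symmetric]) (simp add: mult_ac)
qed

lemma cauchy_conv_commute: "cauchy_conv a b = cauchy_conv b a"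
proof
  fix k
  have "cauchy_conv a b k = (\<Sum>p\<le>k. a (k - p) * b (k - (k - p)))"
    unfolding cauchy_conv_def atMost_atLeast0 by (subst sum.atLeastAtMost_rev) simp
  also have "\<dots> = cauchy_conv b a k"
    unfolding cauchy_conv_def by (intro sum.cong refl) (auto simp: mult.commute)
  finally show "cauchy_conv a b k = cauchy_conv b a k" .
qed

lemma cauchy_conv_mult_power:
  "cauchy_conv (\<lambda>k. a k * x ^ k) (\<lambda>k. b k * x ^ k) = (\<lambda>k. cauchy_conv a b k * x ^ k)"
  unfolding cauchy_conv_def sum_distrib_right
  by (intro ext sum.cong refl) (simp add: mult_ac flip: power_add)

lemma cauchy_conv_exp:
  "cauchy_conv (\<lambda>k. x ^ k / fact k) (\<lambda>k. y ^ k / fact k) = (\<lambda>k. (x + y) ^ k / fact k)"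
proof
  fix k
  have "(x + y) ^ k / fact k = (\<Sum>p\<le>k. (of_nat (k choose p) / fact k) * x ^ p * y ^ (k - p))"
    by (simp add: binomial_ring sum_distrib_left sum_divide_distrib mult_ac)
  also have "\<dots> = cauchy_conv (\<lambda>k. x ^ k / fact k) (\<lambda>k. y ^ k / fact k) k"
    unfolding cauchy_conv_def by (intro sum.cong refl) (simp add: binomial_fact field_simps)
  finally show "cauchy_conv (\<lambda>k. x ^ k / fact k) (\<lambda>k. y ^ k / fact k) k = (x + y) ^ k / fact k" ..
qed

lemma matrix_mul_uminus_left: "(- A::real^'n^'m) ** B = - (A ** B)"
  by (simp add: vec_eq_iff matrix_matrix_mult_def sum_negf)

lemma matrix_mul_uminus_right: "(A::real^'n^'m) ** - B = - (A ** B)"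
  by (simp add: vec_eq_iff matrix_matrix_mult_def sum_negf)

lemma matrix_add_rdistrib: "((A::real^'n^'m) + B) ** C = A ** C + B ** C"
  by (simp add: vec_eq_iff matrix_matrix_mult_def sum.distrib algebra_simps)

lemma matrix_vector_mult_uminus_left: "(- A::real^'n^'m) *v x = - (A *v x)"
  by (simp add: vec_eq_iff matrix_vector_mult_def sum_negf)

lemma skew_matrix_inner:
  fixes M :: "real^'n^'n"
  assumes "transpose M = - M"
  shows "(M *v x) \<bullet> y = - (x \<bullet> (M *v y))"
  by (metis assms dot_lmul_matrix inner_minus_right matrix_vector_mult_uminus_left vector_transpose_matrix)

lemma inner_anticommuting_skew:
  fixes K J :: "real^'n^'n"
  assumes K: "transpose K = - K" and J: "transpose J = - J" and KJ: "K ** J + J ** K = 0"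
  shows "(K *v (a1 *\<^sub>R x + b1 *\<^sub>R (J *v x))) \<bullet> (a2 *\<^sub>R x + b2 *\<^sub>R (J *v x)) = 0"
proof -
  have KJx: "K *v (J *v x) = - (J *v (K *v x))"
    using KJ by (simp add: matrix_vector_mul_assoc eq_neg_iff_add_eq_0 flip: matrix_vector_mult_add_rdistrib)
  have "(K *v (J *v x)) \<bullet> x = - ((J *v (K *v x)) \<bullet> x)"
    by (simp add: KJx)
  also have "\<dots> = (K *v x) \<bullet> (J *v x)"
    by (simp add: skew_matrix_inner[OF J])
  also have "\<dots> = - ((K *v (J *v x)) \<bullet> x)"
    using skew_matrix_inner[OF K, of x "J *v x"] skew_matrix_inner[OF K, of "J *v x" x]
    by (simp add: inner_commute)
  finally have k4: "(K *v (J *v x)) \<bullet> x = 0"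
    by simp
  then have k3: "(K *v x) \<bullet> (J *v x) = 0"
    using skew_matrix_inner[OF K, of "J *v x" x] by (simp add: inner_commute)
  have "(K *v y) \<bullet> y = 0" for y
    using skew_matrix_inner[OF K, of y y] by (simp add: inner_commute)
  then show ?thesis
    by (simp add: matrix_vector_right_distrib matrix_vector_mult_scaleR inner_add_left inner_add_right k3 k4)
qed

lemma norm_matrix_le_sum_abs: "norm (M::real^'n^'m) \<le> (\<Sum>i\<in>UNIV. \<Sum>j\<in>UNIV. \<bar>M $ i $ j\<bar>)"
proof -
  have "norm M \<le> (\<Sum>i\<in>UNIV. norm (M $ i))"
    by (simp add: norm_vec_def L2_set_le_sum)
  also have "\<dots> \<le> (\<Sum>i\<in>UNIV. \<Sum>j\<in>UNIV. \<bar>M $ i $ j\<bar>)"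
    by (intro sum_mono) (simp add: norm_le_l1_cart)
  finally show ?thesis .
qed

lemma bounded_linear_matrix_component: "bounded_linear (\<lambda>M::real^'n^'m. M $ i $ j)"
  by (rule bounded_linear_compose[OF bounded_linear_vec_nth bounded_linear_vec_nth])

lemma bounded_linear_matrix_mult_left: "bounded_linear (\<lambda>M::real^'n^'n. B ** M)"
  by (intro linear_conv_bounded_linear[THEN iffD1] linearI)
     (simp_all add: matrix_add_ldistrib matrix_scalar_ac scalar_matrix_assoc)

lemma bounded_linear_matrix_mult_right: "bounded_linear (\<lambda>M::real^'n^'n. M ** B)"
  by (intro linear_conv_bounded_linear[THEN iffD1] linearI)
     (simp_all add: vec_eq_iff matrix_matrix_mult_def sum.distrib algebra_simps sum_distrib_left)

lemma bounded_linear_matrix_vector_mult: "bounded_linear (\<lambda>M::real^'n^'m. M *v v)"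
  by (intro linear_conv_bounded_linear[THEN iffD1] linearI)
     (simp_all add: matrix_vector_mult_add_rdistrib scaleR_matrix_vector_assoc)

lemma bounded_bilinear_matrix_vector_mult: "bounded_bilinear (\<lambda>(A::real^'n^'m) x. A *v x)"
proof -
  have "bilinear (\<lambda>(A::real^'n^'m) x. A *v x)"
    unfolding bilinear_def
    by (auto intro!: linearI simp: matrix_vector_mult_add_rdistrib
        scaleR_matrix_vector_assoc matrix_vector_right_distrib matrix_vector_mult_scaleR)
  then show ?thesis
    by (rule bilinear_conv_bounded_bilinear[THEN iffD1])
qed

lemma has_vector_derivative_matrix_componentwise:
  fixes f :: "real \<Rightarrow> real^'n^'m"
  assumes "\<And>i j. ((\<lambda>s. f s $ i $ j) has_real_derivative (D $ i $ j)) (at s)"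
  shows "(f has_vector_derivative D) (at s)"
  unfolding has_vector_derivative_def
proof (subst has_derivative_componentwise_within, intro ballI)
  fix b :: "real^'n^'m" assume "b \<in> Basis"
  then obtain i j where b: "b = axis i (axis j 1)"
    by (auto simp: Basis_vec_def)
  have "((\<lambda>s. f s $ i $ j) has_derivative (\<lambda>h. h * D $ i $ j)) (at s)"
    using assms[of i j] by (simp add: has_field_derivative_def mult.commute[of _ "D $ i $ j"])
  then show "((\<lambda>x. f x \<bullet> b) has_derivative (\<lambda>x. x *\<^sub>R D \<bullet> b)) (at s)"
    by (simp add: b inner_axis)
qed

section \<open>Matrix power series\<close>

lemma mpow_add: "mpow A (m + n) = mpow A m ** mpow A n"
  by (induction m) (simp_all add: matrix_mul_assoc)

lemma mpow_commute: "mpow A k ** A = A ** mpow A k"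
  using mpow_add[of A k 1] mpow_add[of A 1 k] by (simp add: add.commute)

lemma mpow_scaleR: "mpow (s *\<^sub>R A) k = s ^ k *\<^sub>R mpow A k"
  by (induction k) (simp_all add: matrix_scalar_ac scalar_matrix_assoc mult.commute)

lemma transpose_mpow_skew:
  fixes B :: "real^'n^'n"
  assumes "transpose B = - B"
  shows "transpose (mpow B k) = (-1) ^ k *\<^sub>R mpow B k"
proof (induction k)
  case (Suc k)
  have "transpose (mpow B (Suc k)) = (-1) ^ k *\<^sub>R (mpow B k ** - B)"
    by (simp add: matrix_transpose_mul Suc.IH assms scalar_matrix_assoc)
  also have "\<dots> = (-1) ^ Suc k *\<^sub>R mpow B (Suc k)"
    by (simp add: mpow_commute matrix_mul_uminus_right)
  finally show ?case .
qed (simp add: transpose_mat)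

lemma mpow_component_bound:
  fixes B :: "real^'n^'n"
  obtains K where "\<And>k i j. \<bar>mpow B k $ i $ j\<bar> \<le> K ^ k"
proof
  define K where "K = 1 + (\<Sum>i\<in>UNIV. \<Sum>l\<in>UNIV. \<bar>B $ i $ l\<bar>)"
  have "K > 0"
    unfolding K_def by (smt (verit) sum_nonneg abs_ge_zero)
  have row: "(\<Sum>l\<in>UNIV. \<bar>B $ i $ l\<bar>) \<le> K" for i
    unfolding K_def using member_le_sum[of i UNIV "\<lambda>i. \<Sum>l\<in>UNIV. \<bar>B $ i $ l\<bar>"]
    by (simp add: sum_nonneg)
  show "\<bar>mpow B k $ i $ j\<bar> \<le> K ^ k" for k i j
  proof (induction k arbitrary: i j)
    case 0
    then show ?case by (simp add: mat_def)
  next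
    case (Suc k)
    have "\<bar>mpow B (Suc k) $ i $ j\<bar> = \<bar>\<Sum>l\<in>UNIV. B $ i $ l * mpow B k $ l $ j\<bar>"
      by (simp add: matrix_matrix_mult_def)
    also have "\<dots> \<le> (\<Sum>l\<in>UNIV. \<bar>B $ i $ l\<bar> * K ^ k)"
      by (rule order_trans[OF sum_abs])
         (auto intro!: sum_mono mult_left_mono Suc.IH simp: abs_mult)
    also have "\<dots> \<le> K * K ^ k"
      using row[of i] \<open>K > 0\<close> by (simp add: sum_distrib_right[symmetric] mult_right_mono)
    finally show ?case by simp
  qed
qed

lemma summable_norm_mpowser:
  fixes B :: "real^'n^'n"
  assumes "entire_coeffs c"
  shows "summable (\<lambda>k. norm (c k *\<^sub>R mpow B k))"
proof -
  obtain K where K: "\<And>k i j. \<bar>mpow B k $ i $ j\<bar> \<le> K ^ k"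
    using mpow_component_bound[of B] by blast
  show ?thesis
  proof (rule summable_comparison_test'[where N=0])
    show "summable (\<lambda>k. real (CARD('n) * CARD('n)) * (\<bar>c k\<bar> * K ^ k))"
      using entire_coeffsD[OF assms] by (rule summable_mult)
    fix k
    have "norm (mpow B k) \<le> (\<Sum>i\<in>(UNIV::'n set). \<Sum>j\<in>(UNIV::'n set). K ^ k)"
      by (rule order_trans[OF norm_matrix_le_sum_abs]) (intro sum_mono K)
    then have "norm (mpow B k) \<le> real (CARD('n) * CARD('n)) * K ^ k"
      by simp
    from mult_left_mono[OF this abs_ge_zero[of "c k"]]
    show "norm (norm (c k *\<^sub>R mpow B k)) \<le> real (CARD('n) * CARD('n)) * (\<bar>c k\<bar> * K ^ k)"
      by (simp add: mult_ac)
  qed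
qed

lemma summable_mpowser:
  fixes B :: "real^'n^'n"
  shows "entire_coeffs c \<Longrightarrow> summable (\<lambda>k. c k *\<^sub>R mpow B k)"
  by (rule summable_norm_cancel[OF summable_norm_mpowser])

lemma bounded_linear_mpowser:
  fixes B :: "real^'n^'n"
  assumes "entire_coeffs c" "bounded_linear L"
  shows "L (mpowser c B) = (\<Sum>k. c k *\<^sub>R L (mpow B k))"
  using bounded_linear.suminf[OF assms(2) summable_mpowser[OF assms(1)]]
  by (simp add: mpowser_def linear_scale[OF bounded_linear.linear[OF assms(2)]])

lemma mpowser_component:
  fixes B :: "real^'n^'n"
  shows "entire_coeffs c \<Longrightarrow> mpowser c B $ i $ j = (\<Sum>k. c k * mpow B k $ i $ j)"
  using bounded_linear_mpowser[OF _ bounded_linear_matrix_component] by simp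

lemma summable_abs_mpowser_component:
  fixes B :: "real^'n^'n"
  assumes "entire_coeffs c"
  shows "summable (\<lambda>k. \<bar>c k * mpow B k $ i $ j\<bar>)"
proof -
  obtain K where K: "\<And>k i j. \<bar>mpow B k $ i $ j\<bar> \<le> K ^ k"
    using mpow_component_bound[of B] by blast
  show ?thesis
    by (rule summable_comparison_test'[where N=0, OF entire_coeffsD[OF assms, of K]])
       (use mult_left_mono[OF K abs_ge_zero] in \<open>simp add: abs_mult\<close>)
qed

lemma mpowser_add:
  fixes B :: "real^'n^'n"
  assumes "entire_coeffs c" "entire_coeffs d"
  shows "mpowser c B + mpowser d B = mpowser (\<lambda>k. c k + d k) B"
  unfolding mpowser_def
  by (simp add: suminf_add[OF summable_mpowser[OF assms(1)] summable_mpowser[OF assms(2)]]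
      scaleR_add_left)

lemma mpowser_cmult:
  fixes B :: "real^'n^'n"
  assumes "entire_coeffs c"
  shows "a *\<^sub>R mpowser c B = mpowser (\<lambda>k. a * c k) B"
  unfolding mpowser_def by (simp add: suminf_scaleR_right[OF summable_mpowser[OF assms]])

lemma mpowser_scaleR: "mpowser c (s *\<^sub>R B) = mpowser (\<lambda>k. c k * s ^ k) B"
  unfolding mpowser_def mpow_scaleR by simp

lemma mpowser_finite:
  assumes "finite N" "\<And>k. k \<notin> N \<Longrightarrow> c k = 0"
  shows "mpowser c B = (\<Sum>k\<in>N. c k *\<^sub>R mpow B k)"
  unfolding mpowser_def by (rule suminf_finite) (use assms in auto)

lemma mpowser_zero: "mpowser (\<lambda>k. 0) B = 0"
  using mpowser_finite[of "{}" "\<lambda>k. 0" B] by simp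

lemma mpowser_one: "mpowser (\<lambda>k. if k = 0 then 1 else 0) B = mat 1"
  using mpowser_finite[of "{0}" "\<lambda>k. if k = 0 then 1 else 0" B] by simp

lemma mpowser_mult:
  fixes B :: "real^'n^'n"
  assumes a: "entire_coeffs a" and b: "entire_coeffs b"
  shows "mpowser a B ** mpowser b B = mpowser (cauchy_conv a b) B"
proof -
  have "(mpowser a B ** mpowser b B) $ i $ j = mpowser (cauchy_conv a b) B $ i $ j" for i j
  proof -
    let ?f = "\<lambda>l k. \<Sum>p\<le>k. (a p * mpow B p $ i $ l) * (b (k - p) * mpow B (k - p) $ l $ j)"
    have prod: "mpowser a B $ i $ l * mpowser b B $ l $ j = (\<Sum>k. ?f l k)" for l
      unfolding mpowser_component[OF a] mpowser_component[OF b]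
      by (rule Cauchy_product)
         (use summable_abs_mpowser_component[OF a] summable_abs_mpowser_component[OF b] in auto)
    have summ: "summable (?f l)" for l
      by (rule summable_Cauchy_product)
         (use summable_abs_mpowser_component[OF a] summable_abs_mpowser_component[OF b] in auto)
    have inner: "(\<Sum>l\<in>UNIV. ?f l k) = cauchy_conv a b k * mpow B k $ i $ j" for k
    proof -
      have "(\<Sum>l\<in>UNIV. ?f l k)
          = (\<Sum>p\<le>k. a p * b (k - p) * (mpow B p ** mpow B (k - p)) $ i $ j)"
        by (subst sum.swap) (simp add: matrix_matrix_mult_def sum_distrib_left algebra_simps)
      also have "\<dots> = (\<Sum>p\<le>k. a p * b (k - p) * mpow B k $ i $ j)"
        by (intro sum.cong refl) (simp flip: mpow_add)
      finally show ?thesis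
        by (simp add: cauchy_conv_def sum_distrib_right)
    qed
    have "(mpowser a B ** mpowser b B) $ i $ j = (\<Sum>l\<in>UNIV. \<Sum>k. ?f l k)"
      by (simp add: matrix_matrix_mult_def prod)
    also have "\<dots> = (\<Sum>k. \<Sum>l\<in>UNIV. ?f l k)"
      by (rule suminf_sum[symmetric]) (rule summ)
    also have "\<dots> = mpowser (cauchy_conv a b) B $ i $ j"
      by (simp add: inner mpowser_component[OF entire_coeffs_cauchy_conv[OF a b]])
    finally show ?thesis .
  qed
  then show ?thesis by (simp add: vec_eq_iff)
qed

lemma mpowser_commute:
  fixes B :: "real^'n^'n"
  assumes "entire_coeffs c"
  shows "mpowser c B ** B = B ** mpowser c B"
  using bounded_linear_mpowser[OF assms bounded_linear_matrix_mult_right[of B]]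
    bounded_linear_mpowser[OF assms bounded_linear_matrix_mult_left[of B]]
  by (simp add: mpow_commute)

lemma mpowser_shift:
  fixes B :: "real^'n^'n"
  assumes "entire_coeffs c"
  shows "B ** mpowser c B = mpowser (\<lambda>k. if k = 0 then 0 else c (k - 1)) B"
proof -
  have "(\<lambda>k. c k *\<^sub>R mpow B (Suc k)) sums (B ** mpowser c B)"
    using bounded_linear.sums[OF bounded_linear_matrix_mult_left summable_sums[OF summable_mpowser[OF assms]]]
    by (simp add: mpowser_def matrix_scalar_ac scalar_matrix_assoc)
  then have "(\<lambda>k. (if k = 0 then 0 else c (k - 1)) *\<^sub>R mpow B k) sums (B ** mpowser c B)"
    using sums_Suc_iff[of "\<lambda>k. (if k = 0 then 0 else c (k - 1)) *\<^sub>R mpow B k"] by simp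
  then show ?thesis
    by (simp add: mpowser_def sums_iff)
qed

lemma has_vector_derivative_mpowser:
  fixes B :: "real^'n^'n"
  assumes a: "entire_coeffs a"
  shows "((\<lambda>s. mpowser (\<lambda>k. a k * s ^ k) B) has_vector_derivative
           B ** mpowser (\<lambda>k. diffs a k * s ^ k) B) (at s)"
proof (rule has_vector_derivative_matrix_componentwise)
  fix i j
  define e where "e k = a k * mpow B k $ i $ j" for k
  have "summable (\<lambda>n. e n * y ^ n)" for y
    using summable_rabs_cancel[OF summable_abs_mpowser_component[OF entire_coeffs_mult_power[OF a]]]
    by (simp add: e_def mult_ac)
  then have "((\<lambda>x. \<Sum>n. e n * x ^ n) has_real_derivative (\<Sum>n. diffs e n * s ^ n)) (at s)"
    by (intro termdiffs_strong_converges_everywhere)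
  moreover have "(\<lambda>s. mpowser (\<lambda>k. a k * s ^ k) B $ i $ j) = (\<lambda>x. \<Sum>n. e n * x ^ n)"
    by (simp add: mpowser_component[OF entire_coeffs_mult_power[OF a]] e_def mult_ac)
  moreover have "(B ** mpowser (\<lambda>k. diffs a k * s ^ k) B) $ i $ j = (\<Sum>n. diffs e n * s ^ n)"
    using bounded_linear_mpowser[OF entire_coeffs_mult_power[OF entire_coeffs_diffs[OF a]]
        bounded_linear_compose[OF bounded_linear_matrix_component bounded_linear_matrix_mult_left[of B]]]
    by (simp add: e_def diffs_def mult_ac)
  ultimately show "((\<lambda>s. mpowser (\<lambda>k. a k * s ^ k) B $ i $ j) has_real_derivative
          (B ** mpowser (\<lambda>k. diffs a k * s ^ k) B) $ i $ j) (at s)"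
    by simp
qed

lemma inner_mpowser_skew:
  fixes B :: "real^'n^'n"
  assumes skew: "transpose B = - B" and c: "entire_coeffs c" and d: "entire_coeffs d"
    and cd: "\<And>k. even k \<Longrightarrow> c k = d k"
  shows "x \<bullet> (mpowser c B *v x) = x \<bullet> (mpowser d B *v x)"
proof -
  have L: "bounded_linear (\<lambda>M::real^'n^'n. x \<bullet> (M *v x))"
    by (rule bounded_linear_compose[OF bounded_linear_inner_right bounded_linear_matrix_vector_mult])
  have odd: "x \<bullet> (mpow B k *v x) = 0" if "odd k" for k
    using skew_matrix_inner[of "mpow B k" x x] transpose_mpow_skew[OF skew, of k] that
    by (simp add: inner_commute)
  have "(\<lambda>k. c k *\<^sub>R (x \<bullet> (mpow B k *v x))) = (\<lambda>k. d k *\<^sub>R (x \<bullet> (mpow B k *v x)))"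
  proof
    fix k
    show "c k *\<^sub>R (x \<bullet> (mpow B k *v x)) = d k *\<^sub>R (x \<bullet> (mpow B k *v x))"
      by (cases "even k") (simp_all add: cd odd)
  qed
  then show ?thesis
    by (simp only: bounded_linear_mpowser[OF c L] bounded_linear_mpowser[OF d L])
qed

section \<open>Exponential-type matrix functions\<close>

lemma mexp_scaleR: "mexp (s *\<^sub>R B) = mpowser (\<lambda>k. s ^ k / fact k) B"
  by (simp add: mexp_def mpowser_scaleR)

lemma mexp_zero: "mexp (0 *\<^sub>R B) = mat 1"
proof -
  have "(\<lambda>k. 0 ^ k / fact k :: real) = (\<lambda>k. if k = 0 then 1 else 0)"
    by auto
  then show ?thesis by (simp only: mexp_scaleR mpowser_one)
qed

lemma mexp_add: "mexp (s *\<^sub>R B) ** mexp (t *\<^sub>R B) = mexp ((s + t) *\<^sub>R B)"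
  by (simp only: mexp_scaleR mpowser_mult[OF entire_coeffs_exp entire_coeffs_exp] cauchy_conv_exp)

lemma mexp_commute: "mexp (s *\<^sub>R B) ** B = B ** mexp (s *\<^sub>R B)"
  unfolding mexp_scaleR by (rule mpowser_commute[OF entire_coeffs_exp])

lemma has_vector_derivative_mexp:
  "((\<lambda>s. mexp (s *\<^sub>R B)) has_vector_derivative B ** mexp (s *\<^sub>R B)) (at s)"
  using has_vector_derivative_mpowser[OF entire_coeffs_inverse_fact[simplified], of B s]
  by (simp add: mexp_scaleR exp_fdiffs divide_inverse mult.commute)

lemma mexpm1_div_zero: "mexpm1_div 0 B = 0"
  by (simp add: mexpm1_div_def mpowser_zero)

lemma mexpm1_div_scaleR: "c *\<^sub>R mexpm1_div s (c *\<^sub>R B) = mexpm1_div (c * s) B"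
  unfolding mexpm1_div_def mpowser_scaleR
  by (subst mpowser_cmult[OF entire_coeffs_mult_power[OF entire_coeffs_expm1_div]])
     (simp add: power_mult_distrib mult_ac)

lemma has_vector_derivative_mexpm1_div:
  fixes B :: "real^'n^'n"
  shows "((\<lambda>s. mexpm1_div s B) has_vector_derivative mexp (s *\<^sub>R B)) (at s)"
proof -
  define c :: "nat \<Rightarrow> real" where "c k = 1 / fact (Suc k)" for k
  have c: "entire_coeffs c"
    unfolding c_def using entire_coeffs_expm1_div[of 1] by simp
  have d: "entire_coeffs (\<lambda>k. diffs c k * s ^ k)"
    by (intro entire_coeffs_mult_power entire_coeffs_diffs c)
  have eq: "mexpm1_div s B = s *\<^sub>R mpowser (\<lambda>k. c k * s ^ k) B" for s
    unfolding mpowser_cmult[OF entire_coeffs_mult_power[OF c]] mexpm1_div_def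
    by (simp add: c_def mult_ac)
  have "((\<lambda>s. mexpm1_div s B) has_vector_derivative
      s *\<^sub>R (B ** mpowser (\<lambda>k. diffs c k * s ^ k) B) + 1 *\<^sub>R mpowser (\<lambda>k. c k * s ^ k) B) (at s)"
    unfolding eq by (intro has_vector_derivative_scaleR has_vector_derivative_mpowser c DERIV_ident)
  also have "s *\<^sub>R (B ** mpowser (\<lambda>k. diffs c k * s ^ k) B) + 1 *\<^sub>R mpowser (\<lambda>k. c k * s ^ k) B
      = mpowser (\<lambda>k. s * (if k = 0 then 0 else diffs c (k - 1) * s ^ (k - 1)) + c k * s ^ k) B"
    unfolding mpowser_shift[OF d] scaleR_one
    by (simp add: mpowser_cmult mpowser_add entire_coeffs_shift[OF d] entire_coeffs_mult_power[OF c]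
        entire_coeffs_cmult)
  also have "\<dots> = mexp (s *\<^sub>R B)"
  proof -
    have "s * (if k = 0 then 0 else diffs c (k - 1) * s ^ (k - 1)) + c k * s ^ k = s ^ k / fact k" for k
    proof (cases k)
      case (Suc j)
      have "(real j + 2) / fact (Suc (Suc j)) = 1 / fact (Suc j)"
        by (subst fact_Suc) (simp add: add.commute del: fact_Suc)
      then have "s ^ Suc j * ((real j + 2) / fact (Suc (Suc j))) = s ^ Suc j / fact (Suc j)"
        by simp
      then show ?thesis
        by (simp add: Suc c_def diffs_def algebra_simps add_divide_distrib del: fact_Suc)
    qed (simp add: c_def)
    then show ?thesis by (simp add: mexp_scaleR)
  qed
  finally show ?thesis .
qed

definition sinhc_coeff :: "nat \<Rightarrow> real" where
  "sinhc_coeff k = (if even k then 1 / fact (k + 1) else 0)"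

definition cosh_coeff :: "nat \<Rightarrow> real" where
  "cosh_coeff k = (if even k then 1 / fact k else 0)"

lemma entire_coeffs_sinhc: "entire_coeffs sinhc_coeff"
proof (rule entire_coeffs_dominated[OF entire_coeffs_inverse_fact, where C=1])
  fix k
  have "1 / fact (k + 1) \<le> (1::real) / fact k"
    by (rule divide_left_mono) (auto intro: fact_mono)
  then show "\<bar>sinhc_coeff k\<bar> \<le> 1 * \<bar>1 / fact k\<bar>" by (simp add: sinhc_coeff_def)
qed

lemma entire_coeffs_cosh: "entire_coeffs cosh_coeff"
  by (rule entire_coeffs_dominated[OF entire_coeffs_inverse_fact, where C=1]) (auto simp: cosh_coeff_def)

lemma msinhc_scaleR: "msinhc (s *\<^sub>R B) = mpowser (\<lambda>k. sinhc_coeff k * s ^ k) B"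
  by (simp add: msinhc_def mpowser_scaleR sinhc_coeff_def)

lemma mcosh_scaleR: "mcosh (s *\<^sub>R B) = mpowser (\<lambda>k. cosh_coeff k * s ^ k) B"
  by (simp add: mcosh_def mpowser_scaleR cosh_coeff_def)

text \<open>The coefficient identities behind \<open>e\<^sup>z sinh z / z = (e\<^sup>2\<^sup>z - 1) / (2z)\<close>,
  \<open>e\<^sup>z cosh z = (e\<^sup>2\<^sup>z + 1) / 2\<close> and \<open>sinh z cosh z / z = sinh (2z) / (2z)\<close>.\<close>

lemma inverse_fact_mult_fact_diff:
  "p \<le> n \<Longrightarrow> 1 / (fact p * fact (n - p)) = real (n choose p) / fact n"
  by (simp add: binomial_fact)

lemma cauchy_conv_sinhc_exp: "cauchy_conv sinhc_coeff (\<lambda>k. 1 / fact k) k = 2 ^ k / fact (k + 1)"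
proof -
  have "cauchy_conv sinhc_coeff (\<lambda>k. 1 / fact k) k
      = (\<Sum>p\<le>k. if odd (Suc p) then real (Suc k choose Suc p) else 0) / fact (Suc k)"
    unfolding cauchy_conv_def sum_divide_distrib
  proof (intro sum.cong refl)
    fix p assume "p \<in> {..k}"
    then have "1 / (fact (Suc p) * fact (Suc k - Suc p)) = real (Suc k choose Suc p) / fact (Suc k)"
      by (intro inverse_fact_mult_fact_diff) auto
    then show "sinhc_coeff p * (1 / fact (k - p))
        = (if odd (Suc p) then real (Suc k choose Suc p) else 0) / fact (Suc k)"
      by (simp add: sinhc_coeff_def)
  qed
  also have "(\<Sum>p\<le>k. if odd (Suc p) then real (Suc k choose Suc p) else 0)
      = (\<Sum>i\<le>Suc k. if odd i then real (Suc k choose i) else 0)"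
    by (subst sum.atMost_Suc_shift) simp
  also have "\<dots> = 2 ^ k"
    using choose_odd_sum[of "Suc k", where 'a=real] by simp
  finally show ?thesis by simp
qed

lemma cauchy_conv_cosh_exp:
  "cauchy_conv cosh_coeff (\<lambda>k. 1 / fact k) k = (2 ^ k / fact k + (if k = 0 then 1 else 0)) / 2"
proof (cases "k = 0")
  case False
  have "cauchy_conv cosh_coeff (\<lambda>k. 1 / fact k) k
      = (\<Sum>p\<le>k. if even p then real (k choose p) else 0) / fact k"
    unfolding cauchy_conv_def sum_divide_distrib
    by (intro sum.cong refl) (auto simp: cosh_coeff_def inverse_fact_mult_fact_diff)
  also have "(\<Sum>p\<le>k. if even p then real (k choose p) else 0) = 2 ^ k / 2"
    using choose_even_sum[of k, where 'a=real] False by simp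
  finally show ?thesis using False by simp
qed (simp add: cauchy_conv_def cosh_coeff_def)

lemma cauchy_conv_sinhc_cosh:
  "cauchy_conv sinhc_coeff cosh_coeff k = (if even k then 2 ^ k / fact (k + 1) else 0)"
proof (cases "even k")
  case True
  have "cauchy_conv sinhc_coeff cosh_coeff k = cauchy_conv sinhc_coeff (\<lambda>k. 1 / fact k) k"
    unfolding cauchy_conv_def using True by (intro sum.cong refl) (auto simp: sinhc_coeff_def cosh_coeff_def)
  then show ?thesis using True by (simp add: cauchy_conv_sinhc_exp)
next
  case False
  have "cauchy_conv sinhc_coeff cosh_coeff k = 0"
    unfolding cauchy_conv_def
  proof (intro sum.neutral ballI)
    fix p assume "p \<in> {..k}"
    then show "sinhc_coeff p * cosh_coeff (k - p) = 0"
      using False by (auto simp: sinhc_coeff_def cosh_coeff_def)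
  qed
  then show ?thesis using False by simp
qed

lemma mexp_mult_mpowser:
  assumes "entire_coeffs c"
  shows "mexp (s *\<^sub>R B) ** mpowser (\<lambda>k. c k * s ^ k) B
    = mpowser (\<lambda>k. cauchy_conv c (\<lambda>k. 1 / fact k) k * s ^ k) B"
proof -
  have "mexp (s *\<^sub>R B) = mpowser (\<lambda>k. 1 / fact k * s ^ k) B"
    by (simp only: mexp_def mpowser_scaleR)
  then show ?thesis
    using mpowser_mult[OF entire_coeffs_mult_power[OF entire_coeffs_inverse_fact]
        entire_coeffs_mult_power[OF assms], of s B]
    by (simp only: cauchy_conv_mult_power cauchy_conv_commute[of "\<lambda>k. 1 / fact k"])
qed

lemma mexp_mult_msinhc:
  "mexp (s *\<^sub>R B) ** msinhc (s *\<^sub>R B) = mpowser (\<lambda>k. 2 ^ k / fact (k + 1) * s ^ k) B"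
  unfolding msinhc_scaleR mexp_mult_mpowser[OF entire_coeffs_sinhc] cauchy_conv_sinhc_exp ..

lemma mexpm1_div_double: "mexpm1_div (2 * s) B = (2 * s) *\<^sub>R (mexp (s *\<^sub>R B) ** msinhc (s *\<^sub>R B))"
proof -
  have "entire_coeffs (\<lambda>k. 1 / 2 * (2 ^ (k + 1) / fact (k + 1)))"
    by (rule entire_coeffs_cmult[OF entire_coeffs_expm1_div])
  then have "entire_coeffs (\<lambda>k. 2 ^ k / fact (k + 1) * s ^ k)"
    by (intro entire_coeffs_mult_power) simp
  then show ?thesis
    unfolding mexp_mult_msinhc mexpm1_div_def
    by (subst mpowser_cmult) (simp_all add: power_mult_distrib field_simps)
qed

lemma mexp_mult_mcosh:
  "mexp (s *\<^sub>R B) ** mcosh (s *\<^sub>R B) = (1/2) *\<^sub>R (mexp ((2 * s) *\<^sub>R B) + mat 1)"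
proof -
  have one: "entire_coeffs (\<lambda>k. if k = 0 then 1 else 0 :: real)"
    by (rule entire_coeffs_dominated[OF entire_coeffs_inverse_fact, where C=1]) auto
  have "(1/2) *\<^sub>R (mexp ((2 * s) *\<^sub>R B) + mat 1)
      = mpowser (\<lambda>k. 1/2 * ((2 * s) ^ k / fact k + (if k = 0 then 1 else 0))) B"
    unfolding mexp_scaleR mpowser_one[symmetric, of B] mpowser_add[OF entire_coeffs_exp one]
    by (rule mpowser_cmult[OF entire_coeffs_add[OF entire_coeffs_exp one]])
  also have "\<dots> = mexp (s *\<^sub>R B) ** mcosh (s *\<^sub>R B)"
  proof -
    have "1/2 * ((2 * s) ^ k / fact k + (if k = 0 then 1 else 0))
        = cauchy_conv cosh_coeff (\<lambda>k. 1 / fact k) k * s ^ k" for k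
      by (cases "k = 0") (simp_all add: cauchy_conv_cosh_exp power_mult_distrib field_simps)
    then show ?thesis
      by (simp only: mcosh_scaleR mexp_mult_mpowser[OF entire_coeffs_cosh])
  qed
  finally show ?thesis ..
qed

lemma inner_mexpm1_div_double:
  fixes B :: "real^'n^'n"
  assumes "transpose B = - B"
  shows "x \<bullet> (mexpm1_div (2 * s) B *v x) = (2 * s) * (((msinhc (s *\<^sub>R B) ** mcosh (s *\<^sub>R B)) *v x) \<bullet> x)"
proof -
  have e: "entire_coeffs (\<lambda>k. cauchy_conv sinhc_coeff cosh_coeff k * s ^ k)"
    by (intro entire_coeffs_mult_power entire_coeffs_cauchy_conv entire_coeffs_sinhc entire_coeffs_cosh)
  have "msinhc (s *\<^sub>R B) ** mcosh (s *\<^sub>R B) = mpowser (\<lambda>k. cauchy_conv sinhc_coeff cosh_coeff k * s ^ k) B"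
    unfolding msinhc_scaleR mcosh_scaleR cauchy_conv_mult_power[symmetric]
    by (rule mpowser_mult[OF entire_coeffs_mult_power[OF entire_coeffs_sinhc]
          entire_coeffs_mult_power[OF entire_coeffs_cosh]])
  then have "(2 * s) * (((msinhc (s *\<^sub>R B) ** mcosh (s *\<^sub>R B)) *v x) \<bullet> x)
      = x \<bullet> (mpowser (\<lambda>k. 2 * s * (cauchy_conv sinhc_coeff cosh_coeff k * s ^ k)) B *v x)"
    by (simp add: mpowser_cmult[OF e, symmetric] inner_commute scaleR_matrix_vector_assoc[symmetric])
  also have "\<dots> = x \<bullet> (mexpm1_div (2 * s) B *v x)"
    unfolding mexpm1_div_def
    by (rule inner_mpowser_skew[OF assms entire_coeffs_cmult[OF e] entire_coeffs_expm1_div])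
       (simp add: cauchy_conv_sinhc_cosh power_mult_distrib field_simps)
  finally show ?thesis ..
qed

section \<open>Matrices squaring to \<open>-I\<close>\<close>

lemma mpow_square_neg_one:
  fixes B :: "real^'n^'n"
  assumes "B ** B = - mat 1"
  shows "mpow B k = fact k *\<^sub>R (cos_coeff k *\<^sub>R mat 1 + sin_coeff k *\<^sub>R B)"
proof (induction k)
  case (Suc k)
  have "mpow B (Suc k) = fact k *\<^sub>R (cos_coeff k *\<^sub>R B - sin_coeff k *\<^sub>R mat 1)"
    by (simp add: Suc.IH matrix_add_ldistrib matrix_scalar_ac scalar_matrix_assoc[symmetric] assms
        scaleR_diff_right mult.commute)
  also have "\<dots> = fact (Suc k) *\<^sub>R (cos_coeff (Suc k) *\<^sub>R mat 1 + sin_coeff (Suc k) *\<^sub>R B)"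
  proof -
    have "fact (Suc k) * cos_coeff (Suc k) = - (fact k * sin_coeff k)"
      and "fact (Suc k) * sin_coeff (Suc k) = fact k * cos_coeff k"
      by (simp_all add: cos_coeff_Suc sin_coeff_Suc)
    then show ?thesis
      by (simp add: scaleR_add_right scaleR_diff_right algebra_simps)
  qed
  finally show ?case .
qed simp

lemma mpowser_square_neg_one:
  fixes B :: "real^'n^'n"
  assumes "B ** B = - mat 1" and c: "entire_coeffs c"
  shows "mpowser c B = (\<Sum>k. c k * fact k * cos_coeff k) *\<^sub>R mat 1 + (\<Sum>k. c k * fact k * sin_coeff k) *\<^sub>R B"
proof -
  have "summable (\<lambda>k. c k * (fact k * f k))" if "\<And>k. \<bar>fact k * f k\<bar> \<le> 1" for f
  proof (rule summable_comparison_test'[where N=0, OF entire_coeffsD[OF c, of 1]])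
    fix k
    show "norm (c k * (fact k * f k)) \<le> \<bar>c k\<bar> * 1 ^ k"
      using mult_left_mono[OF that abs_ge_zero[of "c k"]] by (simp add: abs_mult)
  qed
  then have s1: "summable (\<lambda>k. c k * fact k * cos_coeff k)"
    and s2: "summable (\<lambda>k. c k * fact k * sin_coeff k)"
    by (simp_all add: mult.assoc cos_coeff_def sin_coeff_def)
  have "(\<lambda>k. c k *\<^sub>R mpow B k)
      = (\<lambda>k. (c k * fact k * cos_coeff k) *\<^sub>R mat 1 + (c k * fact k * sin_coeff k) *\<^sub>R B)"
    by (simp add: mpow_square_neg_one[OF assms(1)] scaleR_add_right mult.assoc)
  then show ?thesis
    unfolding mpowser_def
    by (simp add: suminf_add[symmetric] summable_scaleR_left s1 s2 suminf_scaleR_left)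
qed

lemma suminf_cos_coeff: "(\<Sum>k. cos_coeff k * s ^ k) = cos s"
  using cos_converges[of s] by (simp add: sums_iff)

lemma suminf_sin_coeff: "(\<Sum>k. sin_coeff k * s ^ k) = sin s"
  using sin_converges[of s] by (simp add: sums_iff)

lemma sums_sinc: "(\<lambda>k. sin_coeff (Suc k) * s ^ k) sums sinc s"
proof (cases "s = 0")
  case True
  then show ?thesis
    using powser_sums_zero[of "\<lambda>k. sin_coeff (Suc k)"] by (simp add: sinc_def sin_coeff_def)
next
  case False
  have "(\<lambda>k. sin_coeff (Suc k) * s ^ Suc k) sums sin s"
    using sin_converges[of s] sums_Suc_iff[of "\<lambda>k. sin_coeff k * s ^ k"] by simp
  then have "(\<lambda>k. sin_coeff (Suc k) * s ^ Suc k / s) sums (sin s / s)"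
    by (rule sums_divide)
  then show ?thesis
    using False by (simp add: sinc_def mult_ac)
qed

lemma mexp_square_neg_one:
  "B ** B = - mat 1 \<Longrightarrow> mexp (s *\<^sub>R B) = cos s *\<^sub>R mat 1 + sin s *\<^sub>R B"
  unfolding mexp_scaleR
  by (simp add: mpowser_square_neg_one entire_coeffs_exp mult_ac suminf_cos_coeff suminf_sin_coeff)

lemma msinhc_square_neg_one:
  assumes "B ** B = - mat 1"
  shows "msinhc (s *\<^sub>R B) = sinc s *\<^sub>R mat 1"
proof -
  have "(\<lambda>k. sinhc_coeff k * s ^ k * fact k * cos_coeff k) = (\<lambda>k. sin_coeff (Suc k) * s ^ k)"
    by (rule ext) (simp add: sinhc_coeff_def sin_coeff_def cos_coeff_def)
  moreover have "(\<lambda>k. sinhc_coeff k * s ^ k * fact k * sin_coeff k) = (\<lambda>k. 0)"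
    by (rule ext) (simp add: sinhc_coeff_def sin_coeff_def)
  ultimately show ?thesis
    unfolding msinhc_scaleR
      mpowser_square_neg_one[OF assms entire_coeffs_mult_power[OF entire_coeffs_sinhc]]
    by (simp add: sums_unique[OF sums_sinc, symmetric])
qed

lemma mcosh_square_neg_one:
  assumes "B ** B = - mat 1"
  shows "mcosh (s *\<^sub>R B) = cos s *\<^sub>R mat 1"
proof -
  have "(\<lambda>k. cosh_coeff k * s ^ k * fact k * cos_coeff k) = (\<lambda>k. cos_coeff k * s ^ k)"
    by (rule ext) (simp add: cosh_coeff_def cos_coeff_def)
  moreover have "(\<lambda>k. cosh_coeff k * s ^ k * fact k * sin_coeff k) = (\<lambda>k. 0)"
    by (rule ext) (simp add: cosh_coeff_def sin_coeff_def)
  ultimately show ?thesis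
    unfolding mcosh_scaleR
      mpowser_square_neg_one[OF assms entire_coeffs_mult_power[OF entire_coeffs_cosh]]
    by (simp add: suminf_cos_coeff)
qed

section \<open>The matrices \<open>J\<^sub>\<mu>\<close>\<close>

lemma Jmat_inner:
  fixes br :: "real^'n \<Rightarrow> real^'n \<Rightarrow> real^'m"
  assumes "bilinear br"
  shows "(Jmat br \<mu> *v x) \<bullet> y = \<mu> \<bullet> br x y"
proof -
  have x: "x = (\<Sum>j\<in>UNIV. x $ j *\<^sub>R axis j 1)" and y: "y = (\<Sum>k\<in>UNIV. y $ k *\<^sub>R axis k 1)"
    using basis_expansion[of x] basis_expansion[of y] by (simp_all add: scalar_mult_eq_scaleR)
  have "br x y = (\<Sum>(j,k)\<in>UNIV \<times> UNIV. br (x $ j *\<^sub>R axis j 1) (y $ k *\<^sub>R axis k 1))"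
    by (subst x, subst y, rule bilinear_sum[OF assms])
  also have "\<dots> = (\<Sum>(j,k)\<in>UNIV \<times> UNIV. (x $ j * y $ k) *\<^sub>R br (axis j 1) (axis k 1))"
    by (simp add: bilinear_lmul[OF assms] bilinear_rmul[OF assms] mult.commute)
  finally have "\<mu> \<bullet> br x y = (\<Sum>(j,k)\<in>UNIV \<times> UNIV. (x $ j * y $ k) * (\<mu> \<bullet> br (axis j 1) (axis k 1)))"
    by (simp add: inner_sum_right case_prod_unfold)
  also have "\<dots> = (\<Sum>k\<in>UNIV. \<Sum>j\<in>UNIV. (x $ j * y $ k) * (\<mu> \<bullet> br (axis j 1) (axis k 1)))"
    by (subst sum.cartesian_product[symmetric]) (subst sum.swap, simp)
  also have "\<dots> = (Jmat br \<mu> *v x) \<bullet> y"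
    unfolding inner_vec_def[of "Jmat br \<mu> *v x" y]
    by (simp add: matrix_vector_mult_def Jmat_def sum_distrib_right sum_distrib_left mult_ac)
  finally show ?thesis by simp
qed

lemma Jmat_add: "Jmat br (\<mu> + \<nu>) = Jmat br \<mu> + Jmat br \<nu>"
  by (simp add: Jmat_def vec_eq_iff inner_add_left)

lemma Jmat_scaleR: "Jmat br (c *\<^sub>R \<mu>) = c *\<^sub>R Jmat br \<mu>"
  by (simp add: Jmat_def vec_eq_iff)

lemma Jmat_zero [simp]: "Jmat br 0 = 0"
  using Jmat_scaleR[of br 0] by simp

lemma transpose_Jmat:
  assumes "\<And>x y. br x y = - br y x"
  shows "transpose (Jmat br \<mu>) = - Jmat br \<mu>"
  unfolding Jmat_def transpose_def by (simp add: vec_eq_iff) (metis assms inner_minus_right)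

lemma bounded_bilinear_Jmat: "bounded_bilinear (\<lambda>\<mu> x. Jmat br \<mu> *v x)"
proof -
  have "bilinear (\<lambda>\<mu> x. Jmat br \<mu> *v x)"
    unfolding bilinear_def
    by (auto intro!: linearI simp: Jmat_add Jmat_scaleR matrix_vector_mult_add_rdistrib
        scaleR_matrix_vector_assoc matrix_vector_right_distrib matrix_vector_mult_scaleR)
  then show ?thesis
    by (rule bilinear_conv_bounded_bilinear[THEN iffD1])
qed

text \<open>Polarising \<open>- J\<^sub>\<mu>\<^sup>2 = |\<mu>|\<^sup>2 I\<close> gives the Clifford relations.\<close>

lemma Jmat_anticommute:
  assumes "heisenberg_type br"
  shows "Jmat br \<nu> ** Jmat br \<mu> + Jmat br \<mu> ** Jmat br \<nu> = - (2 * (\<nu> \<bullet> \<mu>)) *\<^sub>R mat 1"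
proof -
  have sq: "Jmat br \<kappa> ** Jmat br \<kappa> = - ((\<kappa> \<bullet> \<kappa>) *\<^sub>R mat 1)" for \<kappa>
    using assms unfolding heisenberg_type_def power2_norm_eq_inner by (metis minus_minus)
  have "- ((\<nu> + \<mu>) \<bullet> (\<nu> + \<mu>)) *\<^sub>R mat 1
      = Jmat br \<nu> ** Jmat br \<nu> + (Jmat br \<nu> ** Jmat br \<mu> + Jmat br \<mu> ** Jmat br \<nu>)
        + Jmat br \<mu> ** Jmat br \<mu>"
    using sq[of "\<nu> + \<mu>"] by (simp only: Jmat_add matrix_add_ldistrib matrix_add_rdistrib add_ac scaleR_minus_left)
  also have "(\<nu> + \<mu>) \<bullet> (\<nu> + \<mu>) = \<nu> \<bullet> \<nu> + 2 * (\<nu> \<bullet> \<mu>) + \<mu> \<bullet> \<mu>"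
    by (simp add: inner_add_left inner_add_right inner_commute[of \<mu> \<nu>])
  finally have "Jmat br \<nu> ** Jmat br \<mu> + Jmat br \<mu> ** Jmat br \<nu>
      = - ((\<nu> \<bullet> \<nu> + 2 * (\<nu> \<bullet> \<mu>) + \<mu> \<bullet> \<mu>) *\<^sub>R mat 1)
        + (\<nu> \<bullet> \<nu>) *\<^sub>R mat 1 + (\<mu> \<bullet> \<mu>) *\<^sub>R mat 1"
    unfolding sq by (simp add: algebra_simps)
  then show ?thesis
    by (simp add: scaleR_add_left)
qed

section \<open>Hamilton's equations of the sub-Riemannian Hamiltonian\<close>

definition horizontal_momentum :: "(real^'n \<Rightarrow> real^'n \<Rightarrow> real^'m)
    \<Rightarrow> ((real^'n) \<times> (real^'m)) \<times> ((real^'n) \<times> (real^'m)) \<Rightarrow> real^'n" where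
  "horizontal_momentum br z = fst (snd z) + (1/2) *\<^sub>R (Jmat br (snd (snd z)) *v fst (fst z))"

lemma sR_hamiltonian_eq_norm: "sR_hamiltonian br = (\<lambda>z. norm (horizontal_momentum br z))"
  by (auto simp: sR_hamiltonian_def horizontal_momentum_def)

lemma has_derivative_horizontal_momentum:
  "(horizontal_momentum br has_derivative (\<lambda>h. fst (snd h)
      + (1/2) *\<^sub>R (Jmat br (snd (snd z)) *v fst (fst h) + Jmat br (snd (snd h)) *v fst (fst z)))) (at z)"
proof -
  have "((\<lambda>z. Jmat br (snd (snd z)) *v fst (fst z)) has_derivative
      (\<lambda>h. Jmat br (snd (snd z)) *v fst (fst h) + Jmat br (snd (snd h)) *v fst (fst z))) (at z)"
    by (rule bounded_bilinear.FDERIV[OF bounded_bilinear_Jmat]) (auto intro!: derivative_eq_intros)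
  then show ?thesis
    unfolding horizontal_momentum_def[abs_def]
    by (intro derivative_eq_intros) auto
qed

text \<open>Along the line through \<open>z\<close> in the direction \<open>(0, 0, a, 0)\<close> with \<open>|a| = 1\<close> the
  Hamiltonian is \<open>|r|\<close>.\<close>

lemma sR_hamiltonian_not_differentiable:
  fixes br :: "real^'n \<Rightarrow> real^'n \<Rightarrow> real^'m"
    and z :: "((real^'n) \<times> (real^'m)) \<times> ((real^'n) \<times> (real^'m))"
  assumes "horizontal_momentum br z = 0"
  shows "\<not> sR_hamiltonian br differentiable (at z)"
proof
  assume "sR_hamiltonian br differentiable (at z)"
  then obtain D where D: "(sR_hamiltonian br has_derivative D) (at z)"
    by (auto simp: differentiable_def)
  define h :: "((real^'n) \<times> (real^'m)) \<times> ((real^'n) \<times> (real^'m))"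
    where "h = ((0, 0), (axis undefined 1, 0))"
  define f where "f r = sR_hamiltonian br (z + r *\<^sub>R h)" for r
  have "horizontal_momentum br (z + r *\<^sub>R h) = horizontal_momentum br z + r *\<^sub>R axis undefined 1" for r
    by (simp add: horizontal_momentum_def h_def algebra_simps)
  then have f: "f r = \<bar>r\<bar>" for r
    by (simp add: f_def sR_hamiltonian_eq_norm assms)
  have "((\<lambda>r. z + r *\<^sub>R h) has_derivative (\<lambda>r. r *\<^sub>R h)) (at 0)"
    by (auto intro!: derivative_eq_intros)
  from has_derivative_compose[OF this] D
  have "(f has_derivative (\<lambda>r. D (r *\<^sub>R h))) (at 0)"
    unfolding f_def[abs_def] by simp
  moreover have "(\<lambda>r. D (r *\<^sub>R h)) = (*) (D h)"
    using has_derivative_linear[OF D] by (auto simp: linear_scale mult.commute)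
  ultimately have Df: "DERIV f 0 :> D h"
    by (simp add: has_field_derivative_def)
  have "D h = 0"
    by (rule DERIV_local_min[OF Df, of 1]) (auto simp: f)
  moreover have "D h - 1 = 0"
    by (rule DERIV_local_min[OF DERIV_diff[OF Df DERIV_ident], of 1]) (auto simp: f)
  ultimately show False by simp
qed

lemma has_derivative_sR_hamiltonian:
  assumes "horizontal_momentum br z \<noteq> 0"
  shows "(sR_hamiltonian br has_derivative (\<lambda>h. (fst (snd h) + (1/2) *\<^sub>R
      (Jmat br (snd (snd z)) *v fst (fst h) + Jmat br (snd (snd h)) *v fst (fst z)))
      \<bullet> sgn (horizontal_momentum br z))) (at z)"
  unfolding sR_hamiltonian_eq_norm
  by (rule has_derivative_compose[OF has_derivative_horizontal_momentum has_derivative_norm[OF assms]])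

lemma sR_hamiltonian_gradient:
  fixes br :: "real^'n \<Rightarrow> real^'n \<Rightarrow> real^'m" and qu pm :: "real^'m"
  assumes bl: "bilinear br" and skew: "\<And>x y. br x y = - br y x"
    and E: "\<And>h. (qx, qu) \<bullet> fst h + (px, pm) \<bullet> snd h
      = (fst (snd h) + (1/2) *\<^sub>R (Jmat br \<mu> *v fst (fst h) + Jmat br (snd (snd h)) *v x)) \<bullet> v"
  shows "qx = - ((1/2) *\<^sub>R (Jmat br \<mu> *v v))" and "qu = 0" and "px = v" and "pm = (1/2) *\<^sub>R br x v"
proof -
  have qx: "qx \<bullet> a = - ((1/2) *\<^sub>R (Jmat br \<mu> *v v)) \<bullet> a" for a
    using E[of "((a, 0), (0, 0))"] skew[of a v] by (simp add: Jmat_inner[OF bl] inner_add_left)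
  have qu: "qu \<bullet> b = 0 \<bullet> b" for b
    using E[of "((0, b), (0, 0))"] by simp
  have px: "px \<bullet> a = v \<bullet> a" for a
    using E[of "((0, 0), (a, 0))"] by (simp add: inner_commute)
  have pm: "pm \<bullet> b = (1/2) *\<^sub>R br x v \<bullet> b" for b
    using E[of "((0, 0), (0, b))"] Jmat_inner[OF bl, of b x v] by (simp add: inner_commute)
  show "qx = - ((1/2) *\<^sub>R (Jmat br \<mu> *v v))" and "qu = 0" and "px = v" and "pm = (1/2) *\<^sub>R br x v"
    by (rule vector_eq_rdot[THEN iffD1], use qx qu px pm in simp)+
qed

lemma hamilton_equations_sR_hamiltonian:
  fixes br :: "real^'n \<Rightarrow> real^'n \<Rightarrow> real^'m"
    and \<gamma> :: "real \<Rightarrow> ((real^'n) \<times> (real^'m)) \<times> ((real^'n) \<times> (real^'m))"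
    and s :: real
  assumes bl: "bilinear br" and skew: "\<And>x y. br x y = - br y x"
    and ham: "hamiltonian_curve (sR_hamiltonian br) \<gamma>"
  defines "v \<equiv> sgn (horizontal_momentum br (\<gamma> s))"
  shows "horizontal_momentum br (\<gamma> s) \<noteq> 0"
    and "(\<gamma> has_vector_derivative ((v, (1/2) *\<^sub>R br (fst (fst (\<gamma> s))) v),
          ((1/2) *\<^sub>R (Jmat br (snd (snd (\<gamma> s))) *v v), 0))) (at s)"
proof -
  obtain Dq Dp where H: "(sR_hamiltonian br has_derivative (\<lambda>h. Dq \<bullet> fst h + Dp \<bullet> snd h)) (at (\<gamma> s))"
    and G: "(\<gamma> has_vector_derivative (Dp, - Dq)) (at s)"
    using ham unfolding hamiltonian_curve_def by blast
  show w: "horizontal_momentum br (\<gamma> s) \<noteq> 0"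
    using sR_hamiltonian_not_differentiable[of br "\<gamma> s"] differentiableI[OF H] by blast
  obtain qx qu where Dq: "Dq = (qx, qu)" by (cases Dq)
  obtain px pm where Dp: "Dp = (px, pm)" by (cases Dp)
  from has_derivative_unique[OF H has_derivative_sR_hamiltonian[OF w]]
  have "(qx, qu) \<bullet> fst h + (px, pm) \<bullet> snd h = (fst (snd h) + (1/2) *\<^sub>R
      (Jmat br (snd (snd (\<gamma> s))) *v fst (fst h) + Jmat br (snd (snd h)) *v fst (fst (\<gamma> s)))) \<bullet> v" for h
    unfolding Dq Dp v_def by metis
  from sR_hamiltonian_gradient[OF bl skew this] show "(\<gamma> has_vector_derivative ((v, (1/2) *\<^sub>R br (fst (fst (\<gamma> s))) v),
      ((1/2) *\<^sub>R (Jmat br (snd (snd (\<gamma> s))) *v v), 0))) (at s)"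
    using G by (simp add: Dq Dp)
qed

section \<open>Normal geodesics\<close>

lemma has_vector_derivative_fst:
  "(f has_vector_derivative D) F \<Longrightarrow> ((\<lambda>x. fst (f x)) has_vector_derivative fst D) F"
  by (rule bounded_linear.has_vector_derivative[OF bounded_linear_fst])

lemma has_vector_derivative_snd:
  "(f has_vector_derivative D) F \<Longrightarrow> ((\<lambda>x. snd (f x)) has_vector_derivative snd D) F"
  by (rule bounded_linear.has_vector_derivative[OF bounded_linear_snd])

lemma has_vector_derivative_zero_imp_eq:
  fixes f :: "real \<Rightarrow> 'a::real_normed_vector"
  assumes "\<And>s. (f has_vector_derivative 0) (at s)"
  shows "f s = f 0"
proof -
  obtain c where "\<And>s. s \<in> UNIV \<Longrightarrow> f s = c"
    by (rule has_vector_derivative_zero_constant[of UNIV f]) (use assms in auto)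
  then show ?thesis by simp
qed

locale sR_normal_geodesic =
  fixes br :: "real^'n \<Rightarrow> real^'n \<Rightarrow> real^'m"
    and \<gamma> :: "real \<Rightarrow> ((real^'n) \<times> (real^'m)) \<times> ((real^'n) \<times> (real^'m))"
    and \<xi> :: "real^'n" and \<mu> :: "real^'m"
  assumes bilinear: "bilinear br" and skew: "\<And>x y. br x y = - br y x"
    and hamiltonian: "hamiltonian_curve (sR_hamiltonian br) \<gamma>"
    and initial: "\<gamma> 0 = ((0, 0), (\<xi>, \<mu>))"
begin

definition X :: "real \<Rightarrow> real^'n" where "X s = fst (fst (\<gamma> s))"
definition U :: "real \<Rightarrow> real^'m" where "U s = snd (fst (\<gamma> s))"
definition Xi :: "real \<Rightarrow> real^'n" where "Xi s = fst (snd (\<gamma> s))"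
definition Mu :: "real \<Rightarrow> real^'m" where "Mu s = snd (snd (\<gamma> s))"
definition W :: "real \<Rightarrow> real^'n" where "W s = horizontal_momentum br (\<gamma> s)"
definition A :: "real^'n^'n" where "A = (1 / norm \<xi>) *\<^sub>R Jmat br \<mu>"
definition Jbar :: "real^'n^'n" where "Jbar = Jmat br (sgn \<mu>)"
definition theta :: "real \<Rightarrow> real" where "theta t = t * norm \<mu> / (2 * norm \<xi>)"

lemma initial_values: "X 0 = 0" "U 0 = 0" "Xi 0 = \<xi>" "Mu 0 = \<mu>"
  by (simp_all add: X_def U_def Xi_def Mu_def initial)

lemma W_nonzero: "W s \<noteq> 0"
  unfolding W_def by (rule hamilton_equations_sR_hamiltonian(1)[OF bilinear skew hamiltonian])

lemma has_vector_derivative_curve: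
  "(\<gamma> has_vector_derivative ((sgn (W s), (1/2) *\<^sub>R br (X s) (sgn (W s))),
      ((1/2) *\<^sub>R (Jmat br (Mu s) *v sgn (W s)), 0))) (at s)"
  unfolding W_def X_def Mu_def by (rule hamilton_equations_sR_hamiltonian(2)[OF bilinear skew hamiltonian])

lemma has_vector_derivative_X: "(X has_vector_derivative sgn (W s)) (at s)"
  using has_vector_derivative_fst[OF has_vector_derivative_fst[OF has_vector_derivative_curve]]
  by (simp add: X_def[abs_def])

lemma has_vector_derivative_U: "(U has_vector_derivative (1/2) *\<^sub>R br (X s) (sgn (W s))) (at s)"
  using has_vector_derivative_snd[OF has_vector_derivative_fst[OF has_vector_derivative_curve]]
  by (simp add: U_def[abs_def])

lemma has_vector_derivative_Xi:
  "(Xi has_vector_derivative (1/2) *\<^sub>R (Jmat br (Mu s) *v sgn (W s))) (at s)"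
  using has_vector_derivative_fst[OF has_vector_derivative_snd[OF has_vector_derivative_curve]]
  by (simp add: Xi_def[abs_def])

lemma Mu_eq: "Mu s = \<mu>"
proof -
  have "(Mu has_vector_derivative 0) (at s)" for s
    using has_vector_derivative_snd[OF has_vector_derivative_snd[OF has_vector_derivative_curve]]
    by (simp add: Mu_def[abs_def])
  then show ?thesis
    using has_vector_derivative_zero_imp_eq initial_values by metis
qed

lemma W_eq: "W s = Xi s + (1/2) *\<^sub>R (Jmat br \<mu> *v X s)"
  using Mu_eq by (simp add: W_def horizontal_momentum_def X_def Xi_def Mu_def)

lemma has_vector_derivative_Jmat_X:
  "((\<lambda>s. (1/2) *\<^sub>R (Jmat br \<mu> *v X s)) has_vector_derivative (1/2) *\<^sub>R (Jmat br \<mu> *v sgn (W s))) (at s)"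
  by (rule bounded_linear.has_vector_derivative[OF _ has_vector_derivative_X])
     (intro bounded_linear_compose[OF bounded_linear_scaleR_right] matrix_vector_mul_bounded_linear)

lemma Xi_eq: "Xi s = \<xi> + (1/2) *\<^sub>R (Jmat br \<mu> *v X s)"
proof -
  have "((\<lambda>s. Xi s - (1/2) *\<^sub>R (Jmat br \<mu> *v X s)) has_vector_derivative 0) (at s)" for s
    using has_vector_derivative_diff[OF has_vector_derivative_Xi has_vector_derivative_Jmat_X, of s]
    by (simp add: Mu_eq)
  from has_vector_derivative_zero_imp_eq[OF this] show ?thesis
    by (simp add: initial_values algebra_simps)
qed

lemma Jmat_X: "Jmat br \<mu> *v X s = W s - \<xi>"
  by (simp add: W_eq Xi_eq scaleR_add_left[symmetric])

lemma has_vector_derivative_W: "(W has_vector_derivative Jmat br \<mu> *v sgn (W s)) (at s)"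
  using has_vector_derivative_add[OF has_vector_derivative_Xi has_vector_derivative_Jmat_X, of s]
  by (simp add: W_eq[abs_def] Mu_eq scaleR_add_left[symmetric])

lemma norm_W: "norm (W s) = norm \<xi>"
proof -
  have skew_Jmat: "y \<bullet> (Jmat br \<mu> *v y) = 0" for y
    using skew_matrix_inner[OF transpose_Jmat[of br \<mu>, OF skew], of y y] by (simp add: inner_commute)
  have "((\<lambda>s. W s \<bullet> W s) has_vector_derivative 0) (at s)" for s
    using bounded_bilinear.has_vector_derivative[OF bounded_bilinear_inner
        has_vector_derivative_W has_vector_derivative_W, of s]
    by (simp add: sgn_div_norm inner_commute skew_Jmat matrix_vector_mult_scaleR)
  from has_vector_derivative_zero_imp_eq[OF this, of s] show ?thesis
    by (simp add: W_eq initial_values norm_eq_sqrt_inner)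
qed

lemma xi_nonzero: "\<xi> \<noteq> 0"
  using W_nonzero[of 0] by (simp add: W_eq initial_values)

lemma sgn_W: "sgn (W s) = W s /\<^sub>R norm \<xi>"
  by (simp add: sgn_div_norm norm_W)

lemma has_vector_derivative_W_linear: "(W has_vector_derivative A *v W s) (at s)"
  using has_vector_derivative_W[of s]
  by (simp add: sgn_W A_def matrix_vector_mult_scaleR scaleR_matrix_vector_assoc[symmetric]
      inverse_eq_divide)

text \<open>\<open>exp (- s A) W(s)\<close> is constant.\<close>

lemma W_eq_mexp: "W s = mexp (s *\<^sub>R A) *v \<xi>"
proof -
  define F where "F s = mexp (s *\<^sub>R - A)" for s
  have FA: "F s ** A = A ** F s" for s
    using mexp_commute[of s "- A"] by (simp add: F_def matrix_mul_uminus_right matrix_mul_uminus_left)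
  have "((\<lambda>s. F s *v W s) has_vector_derivative F s *v (A *v W s) + (- A ** F s) *v W s) (at s)" for s
    unfolding F_def
    by (rule bounded_bilinear.has_vector_derivative[OF bounded_bilinear_matrix_vector_mult
          has_vector_derivative_mexp has_vector_derivative_W_linear])
  then have "((\<lambda>s. F s *v W s) has_vector_derivative 0) (at s)" for s
    by (simp add: matrix_vector_mul_assoc FA matrix_vector_mult_uminus_left matrix_mul_uminus_left)
  from has_vector_derivative_zero_imp_eq[OF this, of s]
  have "F s *v W s = \<xi>"
    using mexp_zero[of "- A"] by (simp add: F_def W_eq initial_values)
  moreover have "mexp (s *\<^sub>R A) ** F s = mat 1"
    using mexp_add[of s A "- s"] by (simp add: F_def mexp_zero[of A, simplified])
  ultimately show ?thesis
    by (metis matrix_mul_lid matrix_vector_mul_assoc matrix_vector_mul_lid)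
qed

lemma sgn_W_eq_mexp: "sgn (W s) = mexp (s *\<^sub>R A) *v sgn \<xi>"
proof -
  have "sgn (W s) = W s /\<^sub>R norm \<xi>"
    by (rule sgn_W)
  also have "\<dots> = mexp (s *\<^sub>R A) *v sgn \<xi>"
    by (simp add: W_eq_mexp sgn_div_norm matrix_vector_mult_scaleR)
  finally show ?thesis .
qed

lemma X_eq_mexpm1_div: "X s = mexpm1_div s A *v sgn \<xi>"
proof -
  have "((\<lambda>s. X s - mexpm1_div s A *v sgn \<xi>) has_vector_derivative
      sgn (W s) - mexp (s *\<^sub>R A) *v sgn \<xi>) (at s)" for s
    by (intro has_vector_derivative_diff has_vector_derivative_X
        bounded_linear.has_vector_derivative[OF bounded_linear_matrix_vector_mult]
        has_vector_derivative_mexpm1_div)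
  then have "((\<lambda>s. X s - mexpm1_div s A *v sgn \<xi>) has_vector_derivative 0) (at s)" for s
    by (simp add: sgn_W_eq_mexp)
  from has_vector_derivative_zero_imp_eq[OF this, of s] show ?thesis
    by (simp add: initial_values mexpm1_div_zero)
qed

lemma Xi_eq_mexp: "Xi s = (1/2) *\<^sub>R (mexp (s *\<^sub>R A) *v \<xi> + \<xi>)"
proof -
  have "W s + \<xi> = 2 *\<^sub>R Xi s"
    by (simp add: W_eq Xi_eq scaleR_2 algebra_simps)
  then show ?thesis
    by (simp add: W_eq_mexp[symmetric])
qed

lemma inner_mu_U: "\<mu> \<bullet> U s = (s * norm \<xi> - \<xi> \<bullet> X s) / 2"
proof -
  have "(\<mu> \<bullet> (1/2) *\<^sub>R br (X s) (sgn (W s))) = (norm \<xi> - \<xi> \<bullet> sgn (W s)) / 2" for s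
  proof -
    have "\<mu> \<bullet> br (X s) (sgn (W s)) = (W s - \<xi>) \<bullet> sgn (W s)"
      by (simp add: Jmat_inner[OF bilinear, symmetric] Jmat_X)
    also have "\<dots> = norm \<xi> - \<xi> \<bullet> sgn (W s)"
      by (simp add: inner_diff_left sgn_W norm_W power2_norm_eq_inner[symmetric] power2_eq_square
          xi_nonzero right_diff_distrib)
    finally show ?thesis by simp
  qed
  then have "((\<lambda>s. \<mu> \<bullet> U s - (s * norm \<xi> - \<xi> \<bullet> X s) / 2) has_vector_derivative 0) (at s)" for s
    using bounded_linear.has_vector_derivative[OF bounded_linear_inner_right has_vector_derivative_U, of \<mu> s]
      bounded_linear.has_vector_derivative[OF bounded_linear_inner_right has_vector_derivative_X, of \<xi> s]
    by (auto intro!: derivative_eq_intros simp: has_real_derivative_iff_has_vector_derivative[symmetric])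
  from has_vector_derivative_zero_imp_eq[OF this, of s] show ?thesis
    by (simp add: initial_values)
qed

lemma transpose_A: "transpose A = - A"
  by (simp add: A_def transpose_scalar transpose_Jmat[OF skew])

lemma X_eq_msinhc: "X t = t *\<^sub>R ((mexp ((t/2) *\<^sub>R A) ** msinhc ((t/2) *\<^sub>R A)) *v sgn \<xi>)"
  using mexpm1_div_double[of "t/2" A] by (simp add: X_eq_mexpm1_div scaleR_matrix_vector_assoc)

lemma Xi_eq_mcosh: "Xi t = (mexp ((t/2) *\<^sub>R A) ** mcosh ((t/2) *\<^sub>R A)) *v \<xi>"
  by (simp add: Xi_eq_mexp mexp_mult_mcosh matrix_vector_mult_add_rdistrib
      scaleR_matrix_vector_assoc[symmetric])

lemma inner_mu_U_eq:
  "\<mu> \<bullet> U t = (t * norm \<xi> / 2)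
     * (1 - ((msinhc ((t/2) *\<^sub>R A) ** mcosh ((t/2) *\<^sub>R A)) *v sgn \<xi>) \<bullet> sgn \<xi>)"
proof -
  have "\<xi> \<bullet> X t = norm \<xi> * (sgn \<xi> \<bullet> (mexpm1_div (2 * (t/2)) A *v sgn \<xi>))"
    by (simp add: X_eq_mexpm1_div sgn_div_norm xi_nonzero)
  also have "\<dots> = t * norm \<xi> * (((msinhc ((t/2) *\<^sub>R A) ** mcosh ((t/2) *\<^sub>R A)) *v sgn \<xi>) \<bullet> sgn \<xi>)"
    by (simp only: inner_mexpm1_div_double[OF transpose_A]) simp
  finally show ?thesis
    by (simp add: inner_mu_U field_simps)
qed

lemma U_eq_integral:
  "U t = (t\<^sup>2 / 4) *\<^sub>R integral {0..1} (\<lambda>\<tau>.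
     br (mexpm1_div (2 * \<tau>) ((t/2) *\<^sub>R A) *v sgn \<xi>) (mexp ((2 * \<tau>) *\<^sub>R ((t/2) *\<^sub>R A)) *v sgn \<xi>))"
proof -
  define g where "g \<tau> = br (mexpm1_div (2 * \<tau>) ((t/2) *\<^sub>R A) *v sgn \<xi>)
    (mexp ((2 * \<tau>) *\<^sub>R ((t/2) *\<^sub>R A)) *v sgn \<xi>)" for \<tau>
  have "((\<lambda>\<tau>. U (t * \<tau>)) has_vector_derivative (t\<^sup>2 / 4) *\<^sub>R g \<tau>) (at \<tau>)" for \<tau>
  proof -
    have "((\<lambda>\<tau>. t * \<tau>) has_vector_derivative t) (at \<tau>)"
      unfolding has_real_derivative_iff_has_vector_derivative[symmetric]
      by (auto intro!: derivative_eq_intros)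
    from vector_diff_chain_at[OF this has_vector_derivative_U]
    have "((\<lambda>\<tau>. U (t * \<tau>)) has_vector_derivative
        t *\<^sub>R (1/2) *\<^sub>R br (X (t * \<tau>)) (sgn (W (t * \<tau>)))) (at \<tau>)"
      by (simp add: o_def)
    moreover have "X (t * \<tau>) = (t/2) *\<^sub>R (mexpm1_div (2 * \<tau>) ((t/2) *\<^sub>R A) *v sgn \<xi>)"
      using mexpm1_div_scaleR[of "t/2" "2 * \<tau>" A]
      by (simp add: X_eq_mexpm1_div scaleR_matrix_vector_assoc)
    moreover have "sgn (W (t * \<tau>)) = mexp ((2 * \<tau>) *\<^sub>R ((t/2) *\<^sub>R A)) *v sgn \<xi>"
      by (simp add: sgn_W_eq_mexp mult.commute)
    ultimately show ?thesis
      by (simp add: g_def bilinear_lmul[OF bilinear] power2_eq_square)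
  qed
  then have "((\<lambda>\<tau>. (t\<^sup>2 / 4) *\<^sub>R g \<tau>) has_integral U (t * 1) - U (t * 0)) {0..1}"
    by (intro fundamental_theorem_of_calculus) (auto intro: has_vector_derivative_at_within)
  then have "U t = integral {0..1} (\<lambda>\<tau>. (t\<^sup>2 / 4) *\<^sub>R g \<tau>)"
    by (simp add: initial_values integral_unique del: integral_cmul)
  then show ?thesis
    by (simp only: integral_cmul g_def)
qed

lemma A_eq_Jbar: "\<mu> \<noteq> 0 \<Longrightarrow> A = (norm \<mu> / norm \<xi>) *\<^sub>R Jbar"
  by (simp add: A_def Jbar_def sgn_div_norm Jmat_scaleR)

lemma theta_scaleR_Jbar: "\<mu> \<noteq> 0 \<Longrightarrow> theta t *\<^sub>R Jbar = (t/2) *\<^sub>R A"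
  by (simp add: A_eq_Jbar theta_def)

lemma X_eq_mexpm1_div_Jbar:
  assumes "\<mu> \<noteq> 0"
  shows "X t = (1 / norm \<mu>) *\<^sub>R (mexpm1_div (2 * theta t) Jbar *v \<xi>)"
proof -
  have "mexpm1_div t A = (norm \<xi> / norm \<mu>) *\<^sub>R (norm \<mu> / norm \<xi>) *\<^sub>R mexpm1_div t A"
    using xi_nonzero assms by simp
  also have "\<dots> = (norm \<xi> / norm \<mu>) *\<^sub>R mexpm1_div (2 * theta t) Jbar"
    by (simp add: A_eq_Jbar[OF assms] mexpm1_div_scaleR theta_def mult.commute)
  finally show ?thesis
    using xi_nonzero by (simp add: X_eq_mexpm1_div sgn_div_norm scaleR_matrix_vector_assoc[symmetric]
        matrix_vector_mult_scaleR)
qed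

lemma Jbar_square:
  assumes "heisenberg_type br" and "\<mu> \<noteq> 0"
  shows "Jbar ** Jbar = - mat 1"
proof -
  have "- (Jbar ** Jbar) = mat 1"
    using assms by (simp add: heisenberg_type_def Jbar_def norm_sgn)
  then show ?thesis
    by (metis minus_minus)
qed

lemma twice_theta_scaleR_Jbar: "\<mu> \<noteq> 0 \<Longrightarrow> (2 * theta t) *\<^sub>R Jbar = t *\<^sub>R A"
  by (simp add: A_eq_Jbar theta_def)

lemma X_eq_msinhc_Jbar:
  "\<mu> \<noteq> 0 \<Longrightarrow> X t = t *\<^sub>R ((mexp (theta t *\<^sub>R Jbar) ** msinhc (theta t *\<^sub>R Jbar)) *v sgn \<xi>)"
  by (simp add: X_eq_msinhc theta_scaleR_Jbar)

lemma Xi_eq_mexp_Jbar: "\<mu> \<noteq> 0 \<Longrightarrow> Xi t = (1/2) *\<^sub>R ((mexp ((2 * theta t) *\<^sub>R Jbar) + mat 1) *v \<xi>)"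
  by (simp add: Xi_eq_mexp twice_theta_scaleR_Jbar matrix_vector_mult_add_rdistrib)

lemma Xi_eq_mcosh_Jbar:
  "\<mu> \<noteq> 0 \<Longrightarrow> Xi t = (mexp (theta t *\<^sub>R Jbar) ** mcosh (theta t *\<^sub>R Jbar)) *v \<xi>"
  by (simp add: Xi_eq_mcosh theta_scaleR_Jbar)

lemma U_eq_integral_Jbar:
  "\<mu> \<noteq> 0 \<Longrightarrow> U t = (t\<^sup>2 / 4) *\<^sub>R integral {0..1} (\<lambda>\<tau>.
     br (mexpm1_div (2 * \<tau>) (theta t *\<^sub>R Jbar) *v sgn \<xi>) (mexp ((2 * \<tau> * theta t) *\<^sub>R Jbar) *v sgn \<xi>))"
  using U_eq_integral[of t] by (simp add: theta_scaleR_Jbar flip: scaleR_scaleR)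

lemma inner_mu_U_Jbar:
  "\<mu> \<noteq> 0 \<Longrightarrow> \<mu> \<bullet> U t = (t * norm \<xi> / 2)
     * (1 - ((msinhc (theta t *\<^sub>R Jbar) ** mcosh (theta t *\<^sub>R Jbar)) *v sgn \<xi>) \<bullet> sgn \<xi>)"
  by (simp add: inner_mu_U_eq theta_scaleR_Jbar)

lemma X_heisenberg:
  assumes "heisenberg_type br" and "\<mu> \<noteq> 0"
  shows "X t = (t * sinc (theta t)) *\<^sub>R ((cos (theta t) *\<^sub>R mat 1 + sin (theta t) *\<^sub>R Jbar) *v sgn \<xi>)"
  using X_eq_msinhc_Jbar[OF assms(2)]
  by (simp add: mexp_square_neg_one msinhc_square_neg_one Jbar_square[OF assms] matrix_scalar_ac
      scaleR_matrix_vector_assoc[symmetric])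

lemma Xi_heisenberg:
  assumes "heisenberg_type br" and "\<mu> \<noteq> 0"
  shows "Xi t = cos (theta t) *\<^sub>R ((cos (theta t) *\<^sub>R mat 1 + sin (theta t) *\<^sub>R Jbar) *v \<xi>)"
  using Xi_eq_mcosh_Jbar[OF assms(2)]
  by (simp add: mexp_square_neg_one mcosh_square_neg_one Jbar_square[OF assms] matrix_scalar_ac
      scaleR_matrix_vector_assoc[symmetric])

text \<open>In the Heisenberg-type case \<open>X\<close> and \<open>W\<close> stay in the plane spanned by \<open>\<xi>\<close> and
  \<open>Jbar \<xi>\<close>, on which \<open>\<langle>J\<^sub>\<nu> p, q\<rangle>\<close> vanishes for \<open>\<nu> \<bottom> \<mu>\<close>, as \<open>J\<^sub>\<nu>\<close> is skew and
  anticommutes with \<open>Jbar\<close>.\<close>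

lemma U_orthogonal:
  assumes H: "heisenberg_type br" and "\<mu> \<noteq> 0" and "\<nu> \<bullet> \<mu> = 0"
  shows "\<nu> \<bullet> U s = 0"
proof -
  define \<rho> where "\<rho> = norm \<mu> / norm \<xi>"
  have JJ: "Jbar ** Jbar = - mat 1" and A: "A = \<rho> *\<^sub>R Jbar"
    using Jbar_square[OF assms(1,2)] A_eq_Jbar[OF assms(2)] by (simp_all add: \<rho>_def)
  have "((\<lambda>s. \<nu> \<bullet> U s) has_vector_derivative 0) (at s)" for s
  proof -
    obtain a1 b1 where X: "X s = a1 *\<^sub>R sgn \<xi> + b1 *\<^sub>R (Jbar *v sgn \<xi>)"
      using mpowser_square_neg_one[OF JJ entire_coeffs_mult_power[OF entire_coeffs_expm1_div, of s \<rho>]]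
      by (simp add: X_eq_mexpm1_div A mexpm1_div_def mpowser_scaleR matrix_vector_mult_add_rdistrib
          scaleR_matrix_vector_assoc[symmetric])
    have W: "sgn (W s) = cos (s * \<rho>) *\<^sub>R sgn \<xi> + sin (s * \<rho>) *\<^sub>R (Jbar *v sgn \<xi>)"
      using mexp_square_neg_one[OF JJ, of "s * \<rho>"]
      by (simp add: sgn_W_eq_mexp A matrix_vector_mult_add_rdistrib scaleR_matrix_vector_assoc[symmetric])
    have "Jmat br \<nu> ** Jbar + Jbar ** Jmat br \<nu> = 0"
      using Jmat_anticommute[OF H, of \<nu> "sgn \<mu>"] \<open>\<nu> \<bullet> \<mu> = 0\<close> by (simp add: Jbar_def sgn_div_norm)
    then have "\<nu> \<bullet> br (X s) (sgn (W s)) = 0"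
      unfolding Jmat_inner[OF bilinear, symmetric] X W Jbar_def
      by (rule inner_anticommuting_skew[OF transpose_Jmat[OF skew] transpose_Jmat[OF skew]])
    then show ?thesis
      using bounded_linear.has_vector_derivative[OF bounded_linear_inner_right has_vector_derivative_U, of \<nu> s]
      by simp
  qed
  from has_vector_derivative_zero_imp_eq[OF this, of s] show ?thesis
    by (simp add: initial_values)
qed

lemma U_parallel:
  assumes "heisenberg_type br" and "\<mu> \<noteq> 0"
  shows "U s = (sgn \<mu> \<bullet> U s) *\<^sub>R sgn \<mu>"
proof -
  define w where "w = U s - (sgn \<mu> \<bullet> U s) *\<^sub>R sgn \<mu>"
  have "w \<bullet> \<mu> = U s \<bullet> \<mu> - (sgn \<mu> \<bullet> U s) * (sgn \<mu> \<bullet> \<mu>)"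
    by (simp add: w_def inner_diff_left)
  also have "sgn \<mu> \<bullet> \<mu> = norm \<mu>"
    using assms(2) by (simp add: sgn_div_norm power2_norm_eq_inner[symmetric] power2_eq_square)
  also have "(sgn \<mu> \<bullet> U s) * norm \<mu> = U s \<bullet> \<mu>"
    using assms(2) by (simp add: sgn_div_norm inner_commute)
  finally have "w \<bullet> \<mu> = 0"
    by simp
  then have "w \<bullet> U s = 0" and "w \<bullet> sgn \<mu> = 0"
    using U_orthogonal[OF assms] by (auto simp: sgn_div_norm)
  then have "w \<bullet> w = 0"
    by (simp add: w_def inner_diff_right)
  then show ?thesis
    by (simp add: w_def)
qed

lemma U_heisenberg:
  assumes H: "heisenberg_type br" and "\<mu> \<noteq> 0"
  shows "U t = (t\<^sup>2 / (4 * theta t) * (1 - sinc (theta t) * cos (theta t))) *\<^sub>R sgn \<mu>"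
proof -
  have "sgn \<xi> \<bullet> sgn \<xi> = 1"
    using xi_nonzero by (simp add: power2_norm_eq_inner[symmetric] norm_sgn)
  then have "\<mu> \<bullet> U t = (t * norm \<xi> / 2) * (1 - sinc (theta t) * cos (theta t))"
    using inner_mu_U_Jbar[OF assms(2), of t]
    by (simp add: msinhc_square_neg_one[OF Jbar_square[OF assms]]
        mcosh_square_neg_one[OF Jbar_square[OF assms]] matrix_scalar_ac scalar_matrix_assoc[symmetric]
        scaleR_matrix_vector_assoc[symmetric])
  \<comment> \<open>at \<open>t = 0\<close> both sides vanish, the right one as \<open>0 / 0 = 0\<close>\<close>
  then have "sgn \<mu> \<bullet> U t = t\<^sup>2 / (4 * theta t) * (1 - sinc (theta t) * cos (theta t))"
    using xi_nonzero assms(2)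
    by (cases "t = 0") (simp_all add: sgn_div_norm theta_def power2_eq_square field_simps)
  then show ?thesis
    by (subst U_parallel[OF assms]) simp
qed

end

theorem corollary5p2:
  fixes br :: "real^'n \<Rightarrow> real^'n \<Rightarrow> real^'m"
    and \<xi> :: "real^'n" and \<mu> :: "real^'m" and t :: real
    and \<gamma> :: "real \<Rightarrow> ((real^'n) \<times> (real^'m)) \<times> ((real^'n) \<times> (real^'m))"
  assumes G: "two_step_bracket br"
    and xi_nz: "\<xi> \<noteq> 0" and mu_nz: "\<mu> \<noteq> 0"
    and ham: "hamiltonian_curve (sR_hamiltonian br) \<gamma>"
    and init: "\<gamma> 0 = ((0, 0), (\<xi>, \<mu>))"
  defines "xt \<equiv> fst (fst (\<gamma> t))" and "ut \<equiv> snd (fst (\<gamma> t))"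
    and "\<xi>t \<equiv> fst (snd (\<gamma> t))"
    and "\<theta> \<equiv> t * norm \<mu> / (2 * norm \<xi>)"
    and "\<mu>b \<equiv> (1 / norm \<mu>) *\<^sub>R \<mu>" and "\<xi>b \<equiv> (1 / norm \<xi>) *\<^sub>R \<xi>"
    and "J \<equiv> Jmat br ((1 / norm \<mu>) *\<^sub>R \<mu>)"
  shows "xt = (1 / norm \<mu>) *\<^sub>R (mexpm1_div (2 * \<theta>) J *v \<xi>)
       \<and> xt = t *\<^sub>R ((mexp (\<theta> *\<^sub>R J) ** msinhc (\<theta> *\<^sub>R J)) *v \<xi>b)
       \<and> \<xi>t = (1/2) *\<^sub>R ((mexp ((2 * \<theta>) *\<^sub>R J) + mat 1) *v \<xi>)
       \<and> \<xi>t = (mexp (\<theta> *\<^sub>R J) ** mcosh (\<theta> *\<^sub>R J)) *v \<xi>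
       \<and> ut = (t\<^sup>2 / 4) *\<^sub>R integral {0..1} (\<lambda>\<tau>.
                br (mexpm1_div (2 * \<tau>) (\<theta> *\<^sub>R J) *v \<xi>b) (mexp ((2 * \<tau> * \<theta>) *\<^sub>R J) *v \<xi>b))
       \<and> \<mu> \<bullet> ut = (t * norm \<xi> / 2)
            * (1 - ((msinhc (\<theta> *\<^sub>R J) ** mcosh (\<theta> *\<^sub>R J)) *v \<xi>b) \<bullet> \<xi>b)
       \<and> (heisenberg_type br \<longrightarrow>
            xt = (t * sinc \<theta>) *\<^sub>R ((cos \<theta> *\<^sub>R mat 1 + sin \<theta> *\<^sub>R J) *v \<xi>b)
          \<and> \<xi>t = cos \<theta> *\<^sub>R ((cos \<theta> *\<^sub>R mat 1 + sin \<theta> *\<^sub>R J) *v \<xi>)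
          \<and> ut = (t\<^sup>2 / (4 * \<theta>) * (1 - sinc \<theta> * cos \<theta>)) *\<^sub>R \<mu>b)"
proof -
  have "bilinear br" and "\<forall>x y. br x y = - br y x"
    using G unfolding two_step_bracket_def by blast+
  then interpret sR_normal_geodesic br \<gamma> \<xi> \<mu>
    using ham init by unfold_locales blast+
  have paper_notation:
    "xt = X t" "ut = U t" "\<xi>t = Xi t" "\<xi>b = sgn \<xi>" "\<mu>b = sgn \<mu>" "J = Jbar" "\<theta> = theta t"
    by (simp_all add: xt_def ut_def \<xi>t_def X_def U_def Xi_def \<xi>b_def \<mu>b_def J_def Jbar_def
        \<theta>_def theta_def sgn_div_norm inverse_eq_divide)
  show ?thesis
    unfolding paper_notation
    by (intro conjI impI X_eq_mexpm1_div_Jbar X_eq_msinhc_Jbar Xi_eq_mexp_Jbar Xi_eq_mcosh_Jbar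
        U_eq_integral_Jbar inner_mu_U_Jbar X_heisenberg Xi_heisenberg U_heisenberg mu_nz) assumption+
qed

end
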